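(* Let $\mathcal X,\mathcal Y$ be Polish spaces and let $c:\mathcal X\times\mathcal Y\to\mathbb R$ be measurable with $|c(x,y)|\le 1$ for all $(x,y)$. Let $\varepsilon>0$. Then for all $\mu\in\mathcal P(\mathcal X)$ and $\nu\in\mathcal P(\mathcal Y)$, \[ \mathrm{OT}_{c,\varepsilon}(\mu,\nu)=\max_{\phi\in\mathcal F_{c,\varepsilon}}\int_{\mathcal X}\phi\,d\mu+\int_{\mathcal Y}\phi^{(c,\varepsilon)}_{\mu}\,d\nu . \]
   Context: $\mathcal P(\cdot)$ denotes Borel probability measures. For $\mu\in\mathcal P(\mathcal X)$, $\nu\in\mathcal P(\mathcal Y)$, the entropic optimal transport cost is $\mathrm{OT}_{c,\varepsilon}(\mu,\nu)=\inf_{\pi\in\Pi(\mu,\nu)}\int c\,d\pi+\varepsilon\,\mathrm{KL}(\pi\mid\mu\otimes\nu)$, where $\Pi(\mu,\nu)$ is the set of probability measures on $\mathcal X\times\mathcal Y$ with marginals $\mu,\nu$, and $\mathrm{KL}(\pi\mid\rho)=\int\log(d\pi/d\rho)\,d\pi$ if $\pi\ll\rho$ and $+\infty$ otherwise. Write $\exp_\varepsilon(t)=\exp(t/\varepsilon)$. For $\xi\in\mathcal P(\mathcal Y)$ and measurable $\psi:\mathcal Y\to\mathbb R$ (with the integral below finite and positive), $\psi^{(c,\varepsilon)}_\xi(x)=-\varepsilon\log\int_{\mathcal Y}\exp_\varepsilon(\psi(y)-c(x,y))\,d\xi(y)$ for $x\in\mathcal X$; symmetrically, for $\tilde\mu\in\mathcal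 P(\mathcal X)$ and measurable $\phi$ on $\mathcal X$, $\phi^{(c,\varepsilon)}_{\tilde\mu}(y)=-\varepsilon\log\int_{\mathcal X}\exp_\varepsilon(\phi(x)-c(x,y))\,d\tilde\mu(x)$. Define $\mathcal F_{c,\varepsilon}=\bigcup_{\xi\in\mathcal P(\mathcal Y)}\{\phi:\mathcal X\to\mathbb R\mid \exists\,\psi:\mathcal Y\to\mathbb R \text{ measurable with }\phi=\psi^{(c,\varepsilon)}_\xi,\ \|\phi\|_\infty\le 3/2,\ \|\psi\|_\infty\le 3/2\}$. *)

theory Defs
  imports "HOL-Probability.Probability"
begin

definition Prob :: "'a::topological_space measure set" where
  "Prob = {M. prob_space M \<and> sets M = sets borel}"

text \<open>Couplings \<Pi>(mu,nu): probability measures on the product (product sigma-algebra,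
  which equals the Borel sigma-algebra of the product for Polish spaces) with marginals mu, nu.\<close>
definition couplings :: "'a::topological_space measure \<Rightarrow> 'b::topological_space measure \<Rightarrow> ('a \<times> 'b) measure set" where
  "couplings \<mu> \<nu> = {\<pi>. prob_space \<pi> \<and> sets \<pi> = sets (\<mu> \<Otimes>\<^sub>M \<nu>) \<and>
                        distr \<pi> \<mu> fst = \<mu> \<and> distr \<pi> \<nu> snd = \<nu>}"

text \<open>The integral is taken in the extended reals as (positive part) - (negative part);
  the negative part is always finite for probability measures.\<close>
definition KL :: "'a measure \<Rightarrow> 'a measure \<Rightarrow> ereal" where
  "KL \<pi> \<rho> = (if sets \<pi> = sets \<rho> \<and> absolutely_continuous \<rho> \<pi>
     then (let L = (\<lambda>x. ln (enn2real (RN_deriv \<rho> \<pi> x))) in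
           enn2ereal (\<integral>\<^sup>+ x. ennreal (max 0 (L x)) \<partial>\<pi>)
           - enn2ereal (\<integral>\<^sup>+ x. ennreal (max 0 (- L x)) \<partial>\<pi>))
     else \<infinity>)"

definition OT :: "('a::topological_space \<times> 'b::topological_space \<Rightarrow> real) \<Rightarrow> real \<Rightarrow>
                  'a measure \<Rightarrow> 'b measure \<Rightarrow> ereal" where
  "OT c \<epsilon> \<mu> \<nu> = (INF \<pi> \<in> couplings \<mu> \<nu>.
      ereal (\<integral> z. c z \<partial>\<pi>) + ereal \<epsilon> * KL \<pi> (\<mu> \<Otimes>\<^sub>M \<nu>))"

definition exp_eps :: "real \<Rightarrow> real \<Rightarrow> real" where
  "exp_eps \<epsilon> t = exp (t / \<epsilon>)"

definition ctrans_Y :: "('a \<times> 'b \<Rightarrow> real) \<Rightarrow> real \<Rightarrow> 'b measure \<Rightarrow> ('b \<Rightarrow> real) \<Rightarrow> 'a \<Rightarrow> real" where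
  "ctrans_Y c \<epsilon> \<xi> \<psi> x = - \<epsilon> * ln (\<integral> y. exp_eps \<epsilon> (\<psi> y - c (x, y)) \<partial>\<xi>)"

definition ctrans_X :: "('a \<times> 'b \<Rightarrow> real) \<Rightarrow> real \<Rightarrow> 'a measure \<Rightarrow> ('a \<Rightarrow> real) \<Rightarrow> 'b \<Rightarrow> real" where
  "ctrans_X c \<epsilon> \<mu> \<phi> y = - \<epsilon> * ln (\<integral> x. exp_eps \<epsilon> (\<phi> x - c (x, y)) \<partial>\<mu>)"

definition Fce :: "('a::topological_space \<times> 'b::topological_space \<Rightarrow> real) \<Rightarrow> real \<Rightarrow> ('a \<Rightarrow> real) set" where
  "Fce c \<epsilon> = (\<Union>\<xi> \<in> (Prob :: 'b measure set).
      {\<phi>. \<exists>\<psi>. \<psi> \<in> borel_measurable borel \<and> \<phi> = ctrans_Y c \<epsilon> \<xi> \<psi> \<and>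
             (\<forall>x. \<bar>\<phi> x\<bar> \<le> 3/2) \<and> (\<forall>y. \<bar>\<psi> y\<bar> \<le> 3/2)})"

end

(*
  Weak duality: for a bounded potential phi with psi its (c,eps)-transform, the exponent
  g(x,y) = (phi x + psi y - c(x,y)) / eps satisfies  int exp g d(mu x nu) = 1, so Gibbs'
  variational inequality gives  int g dpi <= KL(pi | mu x nu)  for every coupling pi; this
  rearranges to  int phi dmu + int psi dnu <= int c dpi + eps KL(pi | mu x nu).
  Equality is attained by Schroedinger potentials, i.e. when phi is also the transform of psi:
  then exp g (mu x nu) is itself a coupling, with relative entropy int g dpi.
  Such potentials exist because |c| <= 1 makes the kernel exp(-c/eps) comparable to a
  constant. A Doeblin argument shows that the transform contracts the oscillation of
  differences by the factor 1 - exp(-6/eps), so the Sinkhorn iterates, normalized at a base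
  point, converge uniformly to a fixed point up to an additive constant, and that constant
  vanishes. Shifting phi and psi by opposite constants finally bounds both by 3/2.
*)
theory Submission
  imports Defs
begin

section \<open>Oscillation and bounded Borel functions\<close>

definition osc_le :: "('a \<Rightarrow> real) \<Rightarrow> real \<Rightarrow> bool" where
  "osc_le f L \<longleftrightarrow> (\<exists>a. \<forall>x. a \<le> f x \<and> f x \<le> a + L)"

lemma osc_leI: "(\<And>x. lo \<le> f x \<and> f x \<le> hi) \<Longrightarrow> osc_le f (hi - lo)"
  unfolding osc_le_def by (intro exI[of _ lo]) auto

lemma osc_leE:
  assumes "osc_le f L"
  obtains a where "\<And>x. a \<le> f x" "\<And>x. f x \<le> a + L"
  using assms unfolding osc_le_def by blast

lemma osc_le_mono:
  assumes "osc_le f L" and "L \<le> L'"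
  shows "osc_le f L'"
proof -
  obtain a where "\<And>x. a \<le> f x" "\<And>x. f x \<le> a + L"
    using assms(1) by (rule osc_leE) blast
  then have "a \<le> f x \<and> f x \<le> a + L'" for x
    using assms(2) by (smt (verit))
  then show ?thesis unfolding osc_le_def by blast
qed

lemma osc_le_affine:
  assumes "osc_le f L" and "0 \<le> t"
  shows "osc_le (\<lambda>x. b - t * f x) (t * L)"
proof -
  obtain a where "\<And>x. a \<le> f x" "\<And>x. f x \<le> a + L"
    using assms(1) by (rule osc_leE) blast
  then have "b - t * (a + L) \<le> b - t * f x \<and> b - t * f x \<le> b - t * a" for x
    using assms(2) by (auto intro: mult_left_mono)
  then show ?thesis
    using osc_leI[of "b - t * (a + L)" "\<lambda>x. b - t * f x" "b - t * a"] by (simp add: algebra_simps)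
qed

lemma osc_le_abs_le:
  assumes "osc_le f L" and "f z = 0"
  shows "\<bar>f x\<bar> \<le> L"
proof -
  obtain a where "\<And>x. a \<le> f x" "\<And>x. f x \<le> a + L"
    using assms(1) by (rule osc_leE) blast
  from this[of x] this[of z] show ?thesis using assms(2) by linarith
qed

lemma osc_le_diff_const:
  assumes "osc_le f L"
  shows "osc_le (\<lambda>x. f x - t) L"
proof -
  obtain a where "\<And>x. a \<le> f x" "\<And>x. f x \<le> a + L"
    using assms by (rule osc_leE) blast
  then have "a - t \<le> f x - t \<and> f x - t \<le> a - t + L" for x
    by (smt (verit))
  then show ?thesis unfolding osc_le_def by blast
qed

definition bounded_borel :: "('a::topological_space \<Rightarrow> real) set" where
  "bounded_borel = {f \<in> borel_measurable borel. \<exists>B. \<forall>x. \<bar>f x\<bar> \<le> B}"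

lemma bounded_borelI: "f \<in> borel_measurable borel \<Longrightarrow> (\<And>x. \<bar>f x\<bar> \<le> B) \<Longrightarrow> f \<in> bounded_borel"
  unfolding bounded_borel_def by blast

lemma bounded_borelE:
  assumes "f \<in> bounded_borel"
  obtains B where "f \<in> borel_measurable borel" "\<And>x. \<bar>f x\<bar> \<le> B"
  using assms unfolding bounded_borel_def by blast

lemma bounded_borel_add_const:
  assumes "f \<in> bounded_borel"
  shows "(\<lambda>x. f x + t) \<in> bounded_borel"
proof -
  obtain B where f: "f \<in> borel_measurable borel" "\<And>x. \<bar>f x\<bar> \<le> B"
    using assms by (metis bounded_borelE)
  have "\<bar>f x + t\<bar> \<le> B + \<bar>t\<bar>" for x
    using f(2)[of x] abs_triangle_ineq[of "f x" t] by linarith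
  then show ?thesis using f(1) by (intro bounded_borelI) auto
qed

lemma ln_mix_exp_le:
  fixes \<theta> s s0 :: real
  assumes \<theta>: "0 < \<theta>" "\<theta> < 1" and s: "0 \<le> s" "s \<le> s0"
  shows "ln (\<theta> + (1 - \<theta>) * exp s) \<le> (1 - \<theta> * exp (- s0)) * s"
proof -
  define h where "h t = (1 - \<theta> * exp (- s0)) * t - ln (\<theta> + (1 - \<theta>) * exp t)" for t
  have D_pos: "0 < \<theta> + (1 - \<theta>) * exp t" for t
    using \<theta> by (simp add: add_pos_pos)
  have "h 0 \<le> h s"
  proof (rule DERIV_nonneg_imp_nondecreasing[OF s(1)])
    fix t assume t: "0 \<le> t" "t \<le> s"
    let ?D = "\<theta> + (1 - \<theta>) * exp t"
    have "DERIV h t :> (1 - \<theta> * exp (- s0)) - (1 - \<theta>) * exp t / ?D"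
      unfolding h_def[abs_def] using D_pos[of t] by (auto intro!: derivative_eq_intros)
    moreover have "?D \<le> exp s0"
    proof -
      have "\<theta> * 1 \<le> \<theta> * exp t"
        using \<theta> t by (intro mult_left_mono) auto
      then have "?D \<le> exp t" by (simp add: algebra_simps)
      also have "\<dots> \<le> exp s0" using t s by simp
      finally show ?thesis .
    qed
    then have "\<theta> * exp (- s0) \<le> \<theta> / ?D"
      using \<theta> D_pos[of t] by (simp add: exp_minus divide_inverse le_imp_inverse_le)
    then have "0 \<le> (1 - \<theta> * exp (- s0)) - (1 - \<theta>) * exp t / ?D"
      using D_pos[of t] by (simp add: field_simps)
    ultimately show "\<exists>y. DERIV h t :> y \<and> 0 \<le> y" by blast
  qed
  then show ?thesis by (simp add: h_def)
qed

lemma ln_mixture_ratio_le: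
  fixes \<theta> p m :: real
  assumes "0 \<le> \<theta>" "\<theta> \<le> 1" "1 \<le> p" "p \<le> m"
  shows "ln (\<theta> * p + (1 - \<theta>) * m) - ln (\<theta> * p + (1 - \<theta>)) \<le> ln (\<theta> + (1 - \<theta>) * m)"
proof -
  have "\<theta> * 1 \<le> \<theta> * p" "(1 - \<theta>) * 1 \<le> (1 - \<theta>) * m"
    using assms by (intro mult_left_mono; simp)+
  then have lo: "1 \<le> \<theta> * p + (1 - \<theta>)" and mix: "1 \<le> \<theta> + (1 - \<theta>) * m"
    by simp_all
  have "(\<theta> + (1 - \<theta>) * m) * (\<theta> * p + (1 - \<theta>)) - (\<theta> * p + (1 - \<theta>) * m)
      = \<theta> * (1 - \<theta>) * ((p - 1) * (m - 1))"
    by (simp add: algebra_simps)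
  also have "\<dots> \<ge> 0" using assms by simp
  finally have "\<theta> * p + (1 - \<theta>) * m \<le> (\<theta> + (1 - \<theta>) * m) * (\<theta> * p + (1 - \<theta>))"
    by simp
  then have "ln (\<theta> * p + (1 - \<theta>) * m) \<le> ln ((\<theta> + (1 - \<theta>) * m) * (\<theta> * p + (1 - \<theta>)))"
    using lo mix by (subst ln_le_cancel_iff) auto
  also have "\<dots> = ln (\<theta> + (1 - \<theta>) * m) + ln (\<theta> * p + (1 - \<theta>))"
    using lo mix by (intro ln_mult_pos) auto
  finally show ?thesis by simp
qed

lemma osc_le_ln_mixture:
  fixes \<theta> p s s0 :: real and r :: "'a \<Rightarrow> real"
  assumes \<theta>: "0 < \<theta>" "\<theta> < 1" and p: "1 \<le> p" "p \<le> exp s" and s: "0 \<le> s" "s \<le> s0"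
    and r: "\<And>y. \<theta> * p + (1 - \<theta>) \<le> r y \<and> r y \<le> \<theta> * p + (1 - \<theta>) * exp s"
  shows "osc_le (\<lambda>y. ln (r y)) ((1 - \<theta> * exp (- s0)) * s)"
proof -
  have "\<theta> * 1 \<le> \<theta> * p"
    using \<theta> p by (intro mult_left_mono) auto
  then have lo: "0 < \<theta> * p + (1 - \<theta>)"
    using \<theta> by linarith
  have "ln (\<theta> * p + (1 - \<theta>)) \<le> ln (r y) \<and> ln (r y) \<le> ln (\<theta> * p + (1 - \<theta>) * exp s)" for y
  proof -
    have "0 < r y" using r[of y] lo by linarith
    then show ?thesis using r[of y] lo by simp
  qed
  then have "osc_le (\<lambda>y. ln (r y)) (ln (\<theta> * p + (1 - \<theta>) * exp s) - ln (\<theta> * p + (1 - \<theta>)))"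
    by (rule osc_leI)
  moreover have "ln (\<theta> * p + (1 - \<theta>) * exp s) - ln (\<theta> * p + (1 - \<theta>)) \<le> (1 - \<theta> * exp (- s0)) * s"
    using ln_mixture_ratio_le[of \<theta> p "exp s"] ln_mix_exp_le[OF \<theta> s] \<theta> p by simp
  ultimately show ?thesis by (rule osc_le_mono)
qed

section \<open>Relative entropy\<close>

lemma mult_max_neg_ln_le_1:
  fixes t :: real
  assumes "0 \<le> t"
  shows "t * max 0 (- ln t) \<le> 1"
proof (cases "0 < t \<and> t \<le> 1")
  case True
  have "- ln t = ln (1 / t)"
    using True by (simp add: ln_div)
  also have "\<dots> \<le> 1 / t - 1"
    using True by (intro ln_le_minus_one) simp
  finally have "t * (- ln t) \<le> t * (1 / t - 1)"
    using True by (intro mult_left_mono) auto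
  also have "\<dots> = 1 - t"
    using True by (simp add: field_simps)
  finally show ?thesis
    using True by (simp add: max_def)
next
  case False
  then have "t = 0 \<or> 0 \<le> ln t"
    using assms by auto
  then show ?thesis by (auto simp: max_def)
qed

lemma (in prob_space) integral_nonpos_if_nn_integral_exp_le_1:
  assumes h: "integrable M h" and exp_h: "(\<integral>\<^sup>+z. ennreal (exp (h z)) \<partial>M) \<le> 1"
  shows "(\<integral>z. h z \<partial>M) \<le> 0"
proof -
  have h_meas[measurable]: "h \<in> borel_measurable M"
    using h by (rule borel_measurable_integrable)
  have exp_int: "integrable M (\<lambda>z. exp (h z))"
    by (rule integrableI_nonneg) (use exp_h in \<open>auto simp: order_le_less_trans\<close>)
  have "ennreal (\<integral>z. exp (h z) \<partial>M) = (\<integral>\<^sup>+z. ennreal (exp (h z)) \<partial>M)"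
    by (rule nn_integral_eq_integral[OF exp_int, symmetric]) simp
  with exp_h have exp_le: "(\<integral>z. exp (h z) \<partial>M) \<le> 1"
    by (metis ennreal_le_1)
  have "(\<integral>z. h z \<partial>M) \<le> (\<integral>z. exp (h z) - 1 \<partial>M)"
    by (rule integral_mono[OF h]) (use exp_int exp_ge_add_one_self in \<open>auto simp: algebra_simps\<close>)
  also have "\<dots> = (\<integral>z. exp (h z) \<partial>M) - 1"
    using exp_int prob_space by simp
  finally show ?thesis
    using exp_le by simp
qed

lemma KL_eq_integral_ln_RN_deriv:
  assumes "sets \<pi> = sets \<rho>" and "absolutely_continuous \<rho> \<pi>"
    and int: "integrable \<pi> (\<lambda>z. ln (enn2real (RN_deriv \<rho> \<pi> z)))"
  shows "KL \<pi> \<rho> = ereal (\<integral>z. ln (enn2real (RN_deriv \<rho> \<pi> z)) \<partial>\<pi>)"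
proof -
  let ?L = "\<lambda>z. ln (enn2real (RN_deriv \<rho> \<pi> z))"
  have "(\<integral>\<^sup>+z. ennreal (max 0 (?L z)) \<partial>\<pi>) = ennreal (\<integral>z. max 0 (?L z) \<partial>\<pi>)"
    "(\<integral>\<^sup>+z. ennreal (max 0 (- ?L z)) \<partial>\<pi>) = ennreal (\<integral>z. max 0 (- ?L z) \<partial>\<pi>)"
    using int by (intro nn_integral_eq_integral; simp)+
  then have "KL \<pi> \<rho> = ereal (\<integral>z. max 0 (?L z) \<partial>\<pi>) - ereal (\<integral>z. max 0 (- ?L z) \<partial>\<pi>)"
    using assms(1,2) by (simp add: KL_def Let_def integral_nonneg_AE)
  also have "\<dots> = ereal (\<integral>z. max 0 (?L z) - max 0 (- ?L z) \<partial>\<pi>)"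
    using int by simp
  also have "(\<lambda>z. max 0 (?L z) - max 0 (- ?L z)) = ?L"
    by (auto simp: max_def)
  finally show ?thesis .
qed

lemma nn_integral_neg_ln_RN_deriv_le_1:
  assumes \<rho>: "prob_space \<rho>" and sets_eq: "sets \<pi> = sets \<rho>" and ac: "absolutely_continuous \<rho> \<pi>"
  shows "(\<integral>\<^sup>+z. ennreal (max 0 (- ln (enn2real (RN_deriv \<rho> \<pi> z)))) \<partial>\<pi>) \<le> 1"
proof -
  interpret \<rho>: prob_space \<rho> by (rule \<rho>)
  have "(\<integral>\<^sup>+z. ennreal (max 0 (- ln (enn2real (RN_deriv \<rho> \<pi> z)))) \<partial>\<pi>)
      = (\<integral>\<^sup>+z. RN_deriv \<rho> \<pi> z * ennreal (max 0 (- ln (enn2real (RN_deriv \<rho> \<pi> z)))) \<partial>\<rho>)"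
    by (rule \<rho>.RN_deriv_nn_integral[OF ac sets_eq]) measurable
  also have "\<dots> \<le> (\<integral>\<^sup>+z. 1 \<partial>\<rho>)"
  proof (rule nn_integral_mono)
    fix z
    show "RN_deriv \<rho> \<pi> z * ennreal (max 0 (- ln (enn2real (RN_deriv \<rho> \<pi> z)))) \<le> 1"
    proof (cases "RN_deriv \<rho> \<pi> z")
      case (real t)
      then have "RN_deriv \<rho> \<pi> z * ennreal (max 0 (- ln (enn2real (RN_deriv \<rho> \<pi> z))))
          = ennreal (t * max 0 (- ln t))"
        by (simp add: ennreal_mult)
      also have "\<dots> \<le> 1"
        using mult_max_neg_ln_le_1[OF real(1)] by simp
      finally show ?thesis .
    qed simp
  qed
  finally show ?thesis
    using \<rho>.emeasure_space_1 by simp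
qed

lemma integrable_ln_RN_deriv_if_KL_finite:
  assumes \<rho>: "prob_space \<rho>" and sets_eq: "sets \<pi> = sets \<rho>"
    and ac: "absolutely_continuous \<rho> \<pi>" and fin: "KL \<pi> \<rho> \<noteq> \<infinity>"
  shows "integrable \<pi> (\<lambda>z. ln (enn2real (RN_deriv \<rho> \<pi> z)))"
proof -
  define L where "L = (\<lambda>z. ln (enn2real (RN_deriv \<rho> \<pi> z)))"
  have L_meas: "L \<in> borel_measurable \<pi>"
    unfolding L_def measurable_cong_sets[OF sets_eq refl] by measurable
  define Pos where "Pos = (\<integral>\<^sup>+z. ennreal (max 0 (L z)) \<partial>\<pi>)"
  define Neg where "Neg = (\<integral>\<^sup>+z. ennreal (max 0 (- L z)) \<partial>\<pi>)"
  have Neg_fin: "Neg < \<infinity>"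
    using nn_integral_neg_ln_RN_deriv_le_1[OF assms(1-3)] by (simp add: Neg_def L_def order_le_less_trans)
  have "KL \<pi> \<rho> = enn2ereal Pos - enn2ereal Neg"
    using ac sets_eq by (simp add: KL_def Pos_def Neg_def L_def)
  then have Pos_fin: "Pos < \<infinity>"
    using fin Neg_fin by (cases Pos; cases Neg) (auto simp: top.not_eq_extremum)
  have "(\<integral>\<^sup>+z. ennreal (norm (L z)) \<partial>\<pi>)
      = (\<integral>\<^sup>+z. ennreal (max 0 (L z)) + ennreal (max 0 (- L z)) \<partial>\<pi>)"
    by (intro nn_integral_cong) (simp add: max_def flip: ennreal_plus)
  also have "\<dots> = Pos + Neg"
    unfolding Pos_def Neg_def using L_meas by (intro nn_integral_add) auto
  finally have "integrable \<pi> L"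
    using Pos_fin Neg_fin L_meas by (intro integrableI_bounded) auto
  then show ?thesis unfolding L_def .
qed

lemma nn_integral_exp_diff_ln_RN_deriv_le:
  assumes \<pi>: "prob_space \<pi>" and \<rho>: "prob_space \<rho>" and sets_eq: "sets \<pi> = sets \<rho>"
    and ac: "absolutely_continuous \<rho> \<pi>" and g: "g \<in> borel_measurable \<rho>"
  shows "(\<integral>\<^sup>+z. ennreal (exp (g z - ln (enn2real (RN_deriv \<rho> \<pi> z)))) \<partial>\<pi>) \<le> (\<integral>\<^sup>+z. ennreal (exp (g z)) \<partial>\<rho>)"
proof -
  interpret \<pi>: prob_space \<pi> by (rule \<pi>)
  interpret \<rho>: prob_space \<rho> by (rule \<rho>)
  have "(\<integral>\<^sup>+z. ennreal (exp (g z - ln (enn2real (RN_deriv \<rho> \<pi> z)))) \<partial>\<pi>)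
      = (\<integral>\<^sup>+z. RN_deriv \<rho> \<pi> z * ennreal (exp (g z - ln (enn2real (RN_deriv \<rho> \<pi> z)))) \<partial>\<rho>)"
    by (rule \<rho>.RN_deriv_nn_integral[OF ac sets_eq]) (use g in measurable)
  also have "\<dots> \<le> (\<integral>\<^sup>+z. ennreal (exp (g z)) \<partial>\<rho>)"
  proof (rule nn_integral_mono_AE)
    have "AE z in \<rho>. RN_deriv \<rho> \<pi> z \<noteq> \<infinity>"
      by (rule \<rho>.RN_deriv_finite[OF \<pi>.sigma_finite_measure_axioms ac sets_eq])
    then show "AE z in \<rho>. RN_deriv \<rho> \<pi> z * ennreal (exp (g z - ln (enn2real (RN_deriv \<rho> \<pi> z))))
        \<le> ennreal (exp (g z))"
    proof eventually_elim
      fix z assume "RN_deriv \<rho> \<pi> z \<noteq> \<infinity>"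
      then obtain t where t: "RN_deriv \<rho> \<pi> z = ennreal t" "0 \<le> t"
        by (cases "RN_deriv \<rho> \<pi> z") auto
      show "RN_deriv \<rho> \<pi> z * ennreal (exp (g z - ln (enn2real (RN_deriv \<rho> \<pi> z)))) \<le> ennreal (exp (g z))"
      proof (cases "t = 0")
        case False
        then have "t * exp (g z - ln t) = exp (g z)"
          using t by (simp add: exp_diff)
        then show ?thesis
          using t by (simp flip: ennreal_mult)
      qed (use t in simp)
    qed
  qed
  finally show ?thesis .
qed

lemma KL_ge_integral:
  assumes \<pi>: "prob_space \<pi>" and \<rho>: "prob_space \<rho>" and sets_eq: "sets \<pi> = sets \<rho>"
    and g: "g \<in> borel_measurable \<rho>" "integrable \<pi> g"
    and exp_g: "(\<integral>\<^sup>+z. ennreal (exp (g z)) \<partial>\<rho>) \<le> 1"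
  shows "ereal (\<integral>z. g z \<partial>\<pi>) \<le> KL \<pi> \<rho>"
proof (cases "absolutely_continuous \<rho> \<pi> \<and> KL \<pi> \<rho> \<noteq> \<infinity>")
  case False
  then have "KL \<pi> \<rho> = \<infinity>"
    by (auto simp: KL_def)
  then show ?thesis by simp
next
  case True
  then have ac: "absolutely_continuous \<rho> \<pi>" by simp
  define L where "L = (\<lambda>z. ln (enn2real (RN_deriv \<rho> \<pi> z)))"
  have L_int: "integrable \<pi> L"
    unfolding L_def using integrable_ln_RN_deriv_if_KL_finite[OF \<rho> sets_eq] True by blast
  have "(\<integral>\<^sup>+z. ennreal (exp (g z - L z)) \<partial>\<pi>) \<le> 1"
    unfolding L_def using nn_integral_exp_diff_ln_RN_deriv_le[OF \<pi> \<rho> sets_eq ac g(1)] exp_g by simp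
  then have "(\<integral>z. g z - L z \<partial>\<pi>) \<le> 0"
    using g(2) L_int by (intro prob_space.integral_nonpos_if_nn_integral_exp_le_1[OF \<pi>]) auto
  moreover have "KL \<pi> \<rho> = ereal (\<integral>z. L z \<partial>\<pi>)"
    unfolding L_def by (rule KL_eq_integral_ln_RN_deriv[OF sets_eq ac L_int[unfolded L_def]])
  ultimately show ?thesis
    using g(2) L_int by simp
qed

lemma KL_density_exp:
  assumes \<rho>: "prob_space \<rho>" and g: "g \<in> borel_measurable \<rho>"
    and int: "integrable (density \<rho> (\<lambda>z. ennreal (exp (g z)))) g"
  shows "KL (density \<rho> (\<lambda>z. ennreal (exp (g z)))) \<rho>
    = ereal (\<integral>z. g z \<partial>density \<rho> (\<lambda>z. ennreal (exp (g z))))"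
proof -
  interpret \<rho>: prob_space \<rho> by (rule \<rho>)
  define \<pi> where "\<pi> = density \<rho> (\<lambda>z. ennreal (exp (g z)))"
  have G_meas: "(\<lambda>z. ennreal (exp (g z))) \<in> borel_measurable \<rho>"
    using g by measurable
  have ac: "absolutely_continuous \<rho> \<pi>"
    unfolding \<pi>_def by (rule absolutely_continuousI_density[OF G_meas])
  have "AE z in \<rho>. ennreal (exp (g z)) = RN_deriv \<rho> \<pi> z"
    unfolding \<pi>_def by (rule \<rho>.RN_deriv_unique[OF G_meas refl])
  then have "AE z in \<rho>. 0 < ennreal (exp (g z)) \<longrightarrow> ln (enn2real (RN_deriv \<rho> \<pi> z)) = g z"
  proof eventually_elim
    fix z assume "ennreal (exp (g z)) = RN_deriv \<rho> \<pi> z"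
    from this[symmetric] show "0 < ennreal (exp (g z)) \<longrightarrow> ln (enn2real (RN_deriv \<rho> \<pi> z)) = g z"
      by simp
  qed
  then have L_eq: "AE z in \<pi>. ln (enn2real (RN_deriv \<rho> \<pi> z)) = g z"
    unfolding \<pi>_def by (subst AE_density[OF G_meas])
  have sets_\<pi>: "sets \<pi> = sets \<rho>"
    by (simp add: \<pi>_def)
  have g_\<pi>: "g \<in> borel_measurable \<pi>" and L_\<pi>: "(\<lambda>z. ln (enn2real (RN_deriv \<rho> \<pi> z))) \<in> borel_measurable \<pi>"
    unfolding measurable_cong_sets[OF sets_\<pi> refl] using g by measurable
  have L_int: "integrable \<pi> (\<lambda>z. ln (enn2real (RN_deriv \<rho> \<pi> z)))"
    using int integrable_cong_AE[OF L_\<pi> g_\<pi> L_eq] by (simp add: \<pi>_def)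
  have "KL \<pi> \<rho> = ereal (\<integral>z. ln (enn2real (RN_deriv \<rho> \<pi> z)) \<partial>\<pi>)"
    by (rule KL_eq_integral_ln_RN_deriv[OF sets_\<pi> ac L_int])
  also have "\<dots> = ereal (\<integral>z. g z \<partial>\<pi>)"
    using integral_cong_AE[OF L_\<pi> g_\<pi> L_eq] by simp
  finally show ?thesis unfolding \<pi>_def .
qed

section \<open>Couplings given by a density\<close>

lemma (in pair_sigma_finite) emeasure_density_times_space:
  assumes G: "G \<in> borel_measurable (M1 \<Otimes>\<^sub>M M2)"
    and G_x: "\<And>x. x \<in> space M1 \<Longrightarrow> (\<integral>\<^sup>+y. G (x, y) \<partial>M2) = 1" and A: "A \<in> sets M1"
  shows "emeasure (density (M1 \<Otimes>\<^sub>M M2) G) (A \<times> space M2) = emeasure M1 A"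
proof -
  have "emeasure (density (M1 \<Otimes>\<^sub>M M2) G) (A \<times> space M2)
      = (\<integral>\<^sup>+z. G z * indicator A (fst z) * indicator (space M2) (snd z) \<partial>(M1 \<Otimes>\<^sub>M M2))"
    using A G by (simp add: emeasure_density indicator_times mult.assoc split_beta' del: times_eq_iff)
  also have "\<dots> = (\<integral>\<^sup>+x. \<integral>\<^sup>+y. G (x, y) * indicator A x * indicator (space M2) y \<partial>M2 \<partial>M1)"
    using A G by (subst M2.nn_integral_fst[symmetric]) auto
  also have "\<dots> = (\<integral>\<^sup>+x. indicator A x \<partial>M1)"
  proof (intro nn_integral_cong)
    fix x assume x: "x \<in> space M1"
    have "(\<integral>\<^sup>+y. G (x, y) * indicator A x * indicator (space M2) y \<partial>M2) = (\<integral>\<^sup>+y. G (x, y) * indicator A x \<partial>M2)"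
      by (intro nn_integral_cong) simp
    also have "\<dots> = indicator A x"
      using x G G_x[OF x] by (subst nn_integral_multc) auto
    finally show "(\<integral>\<^sup>+y. G (x, y) * indicator A x * indicator (space M2) y \<partial>M2) = indicator A x" .
  qed
  finally show ?thesis
    using A by simp
qed

lemma (in pair_sigma_finite) emeasure_density_space_times:
  assumes G: "G \<in> borel_measurable (M1 \<Otimes>\<^sub>M M2)"
    and G_y: "\<And>y. y \<in> space M2 \<Longrightarrow> (\<integral>\<^sup>+x. G (x, y) \<partial>M1) = 1" and B: "B \<in> sets M2"
  shows "emeasure (density (M1 \<Otimes>\<^sub>M M2) G) (space M1 \<times> B) = emeasure M2 B"
proof -
  have "emeasure (density (M1 \<Otimes>\<^sub>M M2) G) (space M1 \<times> B)
      = (\<integral>\<^sup>+z. G z * indicator (space M1) (fst z) * indicator B (snd z) \<partial>(M1 \<Otimes>\<^sub>M M2))"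
    using B G by (simp add: emeasure_density indicator_times mult.assoc split_beta' del: times_eq_iff)
  also have "\<dots> = (\<integral>\<^sup>+y. \<integral>\<^sup>+x. G (x, y) * indicator (space M1) x * indicator B y \<partial>M1 \<partial>M2)"
    using B G by (subst nn_integral_snd[symmetric]) auto
  also have "\<dots> = (\<integral>\<^sup>+y. indicator B y \<partial>M2)"
  proof (intro nn_integral_cong)
    fix y assume y: "y \<in> space M2"
    have "(\<integral>\<^sup>+x. G (x, y) * indicator (space M1) x * indicator B y \<partial>M1) = (\<integral>\<^sup>+x. G (x, y) * indicator B y \<partial>M1)"
      by (intro nn_integral_cong) simp
    also have "\<dots> = indicator B y"
      using y G G_y[OF y] by (subst nn_integral_multc) auto
    finally show "(\<integral>\<^sup>+x. G (x, y) * indicator (space M1) x * indicator B y \<partial>M1) = indicator B y" .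
  qed
  finally show ?thesis
    using B by simp
qed

lemma density_in_couplings:
  fixes \<mu> :: "'a::topological_space measure" and \<nu> :: "'b::topological_space measure"
  assumes \<mu>: "prob_space \<mu>" and \<nu>: "prob_space \<nu>"
    and G: "G \<in> borel_measurable (\<mu> \<Otimes>\<^sub>M \<nu>)"
    and G_x: "\<And>x. x \<in> space \<mu> \<Longrightarrow> (\<integral>\<^sup>+y. G (x, y) \<partial>\<nu>) = 1"
    and G_y: "\<And>y. y \<in> space \<nu> \<Longrightarrow> (\<integral>\<^sup>+x. G (x, y) \<partial>\<mu>) = 1"
  shows "density (\<mu> \<Otimes>\<^sub>M \<nu>) G \<in> couplings \<mu> \<nu>"
proof -
  interpret pair_prob_space \<mu> \<nu>
    using \<mu> \<nu> by (simp add: pair_prob_space_def pair_sigma_finite_def prob_space_imp_sigma_finite)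
  define \<pi> where "\<pi> = density (\<mu> \<Otimes>\<^sub>M \<nu>) G"
  have sets_\<pi>: "sets \<pi> = sets (\<mu> \<Otimes>\<^sub>M \<nu>)" and space_\<pi>: "space \<pi> = space \<mu> \<times> space \<nu>"
    by (simp_all add: \<pi>_def space_pair_measure)
  have fst_\<pi>: "fst \<in> measurable \<pi> \<mu>" and snd_\<pi>: "snd \<in> measurable \<pi> \<nu>"
    by (simp_all add: measurable_cong_sets[OF sets_\<pi> refl])
  have "distr \<pi> \<mu> fst = \<mu>"
  proof (rule measure_eqI)
    fix A assume "A \<in> sets (distr \<pi> \<mu> fst)"
    then have A: "A \<in> sets \<mu>" by simp
    moreover have "fst -` A \<inter> space \<pi> = A \<times> space \<nu>"
      using sets.sets_into_space[OF A] by (auto simp: space_\<pi>)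
    ultimately show "emeasure (distr \<pi> \<mu> fst) A = emeasure \<mu> A"
      unfolding \<pi>_def by (simp add: emeasure_distr[OF fst_\<pi>[unfolded \<pi>_def]] emeasure_density_times_space[OF G G_x])
  qed simp
  moreover have "distr \<pi> \<nu> snd = \<nu>"
  proof (rule measure_eqI)
    fix B assume "B \<in> sets (distr \<pi> \<nu> snd)"
    then have B: "B \<in> sets \<nu>" by simp
    moreover have "snd -` B \<inter> space \<pi> = space \<mu> \<times> B"
      using sets.sets_into_space[OF B] by (auto simp: space_\<pi>)
    ultimately show "emeasure (distr \<pi> \<nu> snd) B = emeasure \<nu> B"
      unfolding \<pi>_def by (simp add: emeasure_distr[OF snd_\<pi>[unfolded \<pi>_def]] emeasure_density_space_times[OF G G_y])
  qed simp
  moreover have "prob_space \<pi>"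
    by (rule prob_spaceI)
       (simp add: \<pi>_def space_pair_measure emeasure_density_times_space[OF G G_x] M1.emeasure_space_1)
  ultimately show ?thesis
    using sets_\<pi> by (simp add: couplings_def \<pi>_def)
qed

section \<open>A Doeblin minorization estimate\<close>

lemma integrable_mult_bounded:
  fixes f g :: "'a \<Rightarrow> real"
  assumes f: "integrable M f" and g: "g \<in> borel_measurable M" and bound: "\<And>x. \<bar>g x\<bar> \<le> C"
  shows "integrable M (\<lambda>x. f x * g x)"
proof (rule Bochner_Integration.integrable_bound)
  show "integrable M (\<lambda>x. \<bar>f x\<bar> * C)"
    using f by simp
  show "(\<lambda>x. f x * g x) \<in> borel_measurable M"
    using borel_measurable_integrable[OF f] g by measurable
  have "0 \<le> C"
    using abs_ge_zero bound order_trans by blast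
  then show "AE x in M. norm (f x * g x) \<le> norm (\<bar>f x\<bar> * C)"
    using bound by (intro AE_I2) (simp add: abs_mult mult_left_mono)
qed

lemma (in prob_space) integral_pos:
  fixes f :: "'a \<Rightarrow> real"
  assumes "integrable M f" and "\<And>x. 0 < f x"
  shows "0 < (\<integral>x. f x \<partial>M)"
proof -
  have "(\<integral>x. f x \<partial>M) \<noteq> 0"
  proof
    assume "(\<integral>x. f x \<partial>M) = 0"
    moreover have "AE x in M. 0 \<le> f x"
    proof (rule AE_I2)
      fix x show "0 \<le> f x"
        using assms(2)[of x] by simp
    qed
    ultimately have "AE x in M. f x = 0"
      using integral_nonneg_eq_0_iff_AE[OF assms(1)] by simp
    then have "AE x in M. False"
    proof eventually_elim
      fix x assume "f x = 0"
      with assms(2)[of x] show False by simp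
    qed
    then show False by simp
  qed
  then show ?thesis
    using assms by (simp add: integral_nonneg_AE less_imp_le order_neq_le_trans)
qed

lemma mixture_bounds_of_minorization:
  fixes V P W U \<kappa>1 \<kappa>2 m :: real
  assumes pos: "0 < V" "0 < W" "0 < \<kappa>1" "0 < \<kappa>2"
    and P: "V \<le> P" "P \<le> m * V" and W: "W \<le> \<kappa>2 * V"
    and low: "\<kappa>1 * (P - V) \<le> U - W" and upp: "\<kappa>1 * (m * V - P) \<le> m * W - U"
  shows "\<kappa>1 / \<kappa>2 * (P / V) + (1 - \<kappa>1 / \<kappa>2) \<le> U / W \<and> U / W \<le> \<kappa>1 / \<kappa>2 * (P / V) + (1 - \<kappa>1 / \<kappa>2) * m"
proof -
  have "0 \<le> \<kappa>1 * (P - V)" "0 \<le> \<kappa>1 * (m * V - P)"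
    using P pos by simp_all
  then have "\<kappa>1 * (P - V) / (\<kappa>2 * V) \<le> (U - W) / W"
    and "\<kappa>1 * (m * V - P) / (\<kappa>2 * V) \<le> (m * W - U) / W"
    using low upp pos W by (intro frac_le; simp)+
  moreover have "\<kappa>1 / \<kappa>2 * (P / V) + (1 - \<kappa>1 / \<kappa>2) = 1 + \<kappa>1 * (P - V) / (\<kappa>2 * V)"
    "\<kappa>1 / \<kappa>2 * (P / V) + (1 - \<kappa>1 / \<kappa>2) * m = m - \<kappa>1 * (m * V - P) / (\<kappa>2 * V)"
    using pos by (simp_all add: field_simps)
  moreover have "U / W = 1 + (U - W) / W" "U / W = m - (m * W - U) / W"
    using pos by (simp_all add: field_simps)
  ultimately show ?thesis
    by linarith
qed

text \<open>Since \<open>\<kappa>1 \<le> k \<le> \<kappa>2\<close>, the probability with density proportional to \<open>v * k\<close> dominates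
  \<open>\<theta>\<close> times the one with density proportional to \<open>v\<close>. Hence the \<open>v * k\<close>-weighted mean \<open>r\<close>
  of \<open>u\<close> is a \<open>\<theta>\<close>-mixture of its \<open>v\<close>-weighted mean \<open>p\<close> and of some value in \<open>[1, m]\<close>.\<close>
lemma (in prob_space) ratio_of_weighted_means_bounds:
  fixes v k u :: "'a \<Rightarrow> real"
  assumes v: "integrable M v" "\<And>x. 0 < v x"
    and meas: "k \<in> borel_measurable M" "u \<in> borel_measurable M"
    and k: "\<And>x. \<kappa>1 \<le> k x" "\<And>x. k x \<le> \<kappa>2" and \<kappa>1: "0 < \<kappa>1"
    and u: "\<And>x. 1 \<le> u x" "\<And>x. u x \<le> m"
  defines "\<theta> \<equiv> \<kappa>1 / \<kappa>2"
    and "p \<equiv> (\<integral>x. v x * u x \<partial>M) / (\<integral>x. v x \<partial>M)"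
    and "r \<equiv> (\<integral>x. v x * k x * u x \<partial>M) / (\<integral>x. v x * k x \<partial>M)"
  shows "1 \<le> p" and "p \<le> m" and "\<theta> * p + (1 - \<theta>) \<le> r \<and> r \<le> \<theta> * p + (1 - \<theta>) * m"
proof -
  note meas[measurable]
  have v0: "0 \<le> v x" and k0: "0 < k x" and \<kappa>2: "0 < \<kappa>2" for x
    using v(2)[of x] k[of x] \<kappa>1 by auto
  have k_bound: "\<bar>k x\<bar> \<le> \<kappa>2" and u_bound: "\<bar>u x\<bar> \<le> m" for x
    using k(2)[of x] u[of x] k0[of x] by simp_all
  have int_vk: "integrable M (\<lambda>x. v x * k x)"
    using v(1) meas(1) k_bound by (rule integrable_mult_bounded)
  have int_vu: "integrable M (\<lambda>x. v x * u x)"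
    using v(1) meas(2) u_bound by (rule integrable_mult_bounded)
  have int_vku: "integrable M (\<lambda>x. v x * k x * u x)"
    using int_vk meas(2) u_bound by (rule integrable_mult_bounded)
  note int = int_vu int_vk int_vku
  have vu: "v x \<le> v x * u x" "v x * u x \<le> m * v x" and vk: "\<kappa>1 * v x \<le> v x * k x" "v x * k x \<le> \<kappa>2 * v x" for x
    using mult_left_mono[OF u(1) v0] mult_left_mono[OF u(2) v0] mult_left_mono[OF k(1) v0]
      mult_left_mono[OF k(2) v0] by (simp_all add: mult_ac)
  define V P W U where "V = (\<integral>x. v x \<partial>M)" and "P = (\<integral>x. v x * u x \<partial>M)"
    and "W = (\<integral>x. v x * k x \<partial>M)" and "U = (\<integral>x. v x * k x * u x \<partial>M)"
  have V0: "0 < V"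
    unfolding V_def using v by (rule integral_pos)
  have "V \<le> P" "P \<le> (\<integral>x. m * v x \<partial>M)" "(\<integral>x. \<kappa>1 * v x \<partial>M) \<le> W" "W \<le> (\<integral>x. \<kappa>2 * v x \<partial>M)"
    unfolding V_def P_def W_def using v(1) int vu vk by (intro integral_mono; simp)+
  then have VP: "V \<le> P" "P \<le> m * V" and W: "\<kappa>1 * V \<le> W" "W \<le> \<kappa>2 * V"
    by (simp_all add: V_def)
  have "\<kappa>1 * (v x * (u x - 1)) \<le> k x * (v x * (u x - 1))"
    "\<kappa>1 * (v x * (m - u x)) \<le> k x * (v x * (m - u x))" for x
    using v0[of x] u[of x] by (intro mult_right_mono k(1); simp)+
  then have "\<kappa>1 * (v x * u x - v x) \<le> v x * k x * u x - v x * k x"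
    "\<kappa>1 * (m * v x - v x * u x) \<le> m * (v x * k x) - v x * k x * u x" for x
    by (simp_all add: algebra_simps)
  then have "(\<integral>x. \<kappa>1 * (v x * u x - v x) \<partial>M) \<le> (\<integral>x. v x * k x * u x - v x * k x \<partial>M)"
    "(\<integral>x. \<kappa>1 * (m * v x - v x * u x) \<partial>M) \<le> (\<integral>x. m * (v x * k x) - v x * k x * u x \<partial>M)"
    using v(1) int by (intro integral_mono; simp)+
  then have "\<kappa>1 * (P - V) \<le> U - W" "\<kappa>1 * (m * V - P) \<le> m * W - U"
    using v(1) int by (simp_all add: V_def P_def W_def U_def)
  moreover have "0 < W"
    using W(1) V0 \<kappa>1 by (smt (verit) mult_pos_pos)
  ultimately have mix: "\<theta> * (P / V) + (1 - \<theta>) \<le> U / W \<and> U / W \<le> \<theta> * (P / V) + (1 - \<theta>) * m"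
    unfolding \<theta>_def using V0 \<kappa>1 \<kappa>2 VP W by (intro mixture_bounds_of_minorization) auto
  have p: "p = P / V" and r: "r = U / W"
    by (simp_all add: p_def r_def P_def V_def U_def W_def)
  show "\<theta> * p + (1 - \<theta>) \<le> r \<and> r \<le> \<theta> * p + (1 - \<theta>) * m"
    unfolding p r by (rule mix)
  show "1 \<le> p" "p \<le> m"
    unfolding p using VP V0 by (simp_all add: field_simps)
qed

section \<open>Fixed points of oscillation contractions\<close>

lemma LIMSEQ_geometric_increments:
  fixes s :: "nat \<Rightarrow> real"
  assumes d: "\<And>n. \<bar>s (Suc n) - s n\<bar> \<le> C * q ^ n" and q: "0 \<le> q" "q < 1"
  obtains l where "s \<longlonglongrightarrow> l" and "\<And>n. \<bar>l - s n\<bar> \<le> C * q ^ n / (1 - q)"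
proof -
  define D where "D k = s (Suc k) - s k" for k
  have geom: "summable (\<lambda>k. C * q ^ k)"
    using q by simp
  have D: "summable (\<lambda>k. \<bar>D k\<bar>)"
    by (rule summable_comparison_test[OF _ geom]) (use d in \<open>simp add: D_def\<close>)
  have partial: "s n = s 0 + (\<Sum>k<n. D k)" for n
    unfolding D_def by (simp add: sum_lessThan_telescope)
  have s_eq: "s = (\<lambda>n. s 0 + (\<Sum>k<n. D k))"
    by (rule ext) (rule partial)
  have "(\<lambda>n. s 0 + (\<Sum>k<n. D k)) \<longlonglongrightarrow> s 0 + suminf D"
    using D by (intro tendsto_add tendsto_const summable_LIMSEQ) (rule summable_rabs_cancel)
  then have "s \<longlonglongrightarrow> s 0 + suminf D"
    by (simp only: s_eq[symmetric])
  moreover have "\<bar>(s 0 + suminf D) - s n\<bar> \<le> C * q ^ n / (1 - q)" for n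
  proof -
    have "(s 0 + suminf D) - s n = (\<Sum>k. D (k + n))"
      using suminf_split_initial_segment[of D n] D partial[of n] by (simp add: summable_rabs_cancel)
    also have "\<bar>\<dots>\<bar> \<le> (\<Sum>k. \<bar>D (k + n)\<bar>)"
      by (rule summable_rabs[OF summable_ignore_initial_segment[OF D]])
    also have "\<dots> \<le> (\<Sum>k. C * q ^ n * q ^ k)"
    proof (rule suminf_le)
      show "\<bar>D (k + n)\<bar> \<le> C * q ^ n * q ^ k" for k
        using d[of "k + n"] by (simp add: D_def power_add mult_ac)
      show "summable (\<lambda>k. \<bar>D (k + n)\<bar>)"
        by (rule summable_ignore_initial_segment[OF D])
      show "summable (\<lambda>k. C * q ^ n * q ^ k)"
        using q by simp
    qed
    also have "\<dots> = C * q ^ n / (1 - q)"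
      using q by (simp add: suminf_mult suminf_geometric divide_simps)
    finally show ?thesis .
  qed
  ultimately show ?thesis by (rule that)
qed

locale osc_contraction =
  fixes F :: "('a::topological_space \<Rightarrow> real) \<Rightarrow> 'a \<Rightarrow> real" and q :: real
  assumes q: "0 \<le> q" "q < 1"
    and closed: "\<And>\<phi>. \<phi> \<in> bounded_borel \<Longrightarrow> F \<phi> \<in> bounded_borel"
    and osc: "\<And>\<phi>. \<phi> \<in> bounded_borel \<Longrightarrow> osc_le (F \<phi>) 2"
    and contraction: "\<And>\<phi>1 \<phi>2 L. \<phi>1 \<in> bounded_borel \<Longrightarrow> \<phi>2 \<in> bounded_borel \<Longrightarrow>
      osc_le (\<lambda>x. \<phi>1 x - \<phi>2 x) L \<Longrightarrow> 0 \<le> L \<Longrightarrow> L \<le> 4 \<Longrightarrow>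
      osc_le (\<lambda>x. F \<phi>1 x - F \<phi>2 x) (q * L)"
    and nonexpansive: "\<And>\<phi>1 \<phi>2 d x. \<phi>1 \<in> bounded_borel \<Longrightarrow> \<phi>2 \<in> bounded_borel \<Longrightarrow>
      (\<And>x. \<bar>\<phi>1 x - \<phi>2 x\<bar> \<le> d) \<Longrightarrow> \<bar>F \<phi>1 x - F \<phi>2 x\<bar> \<le> d"
begin

text \<open>The oscillation does not see additive constants, so the iterates are normalized to
  vanish at an arbitrary base point.\<close>
definition iterate :: "nat \<Rightarrow> 'a \<Rightarrow> real" where
  "iterate n = ((\<lambda>\<phi> x. F \<phi> x - F \<phi> undefined) ^^ n) (\<lambda>_. 0)"

lemma iterate_0: "iterate 0 = (\<lambda>_. 0)"
  by (simp add: iterate_def)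

lemma iterate_Suc: "iterate (Suc n) = (\<lambda>x. F (iterate n) x - F (iterate n) undefined)"
  by (simp add: iterate_def)

lemma iterate_undefined: "iterate n undefined = 0"
  by (cases n) (simp_all add: iterate_0 iterate_Suc)

lemma iterate_bounded: "iterate n \<in> bounded_borel \<and> (\<forall>x. \<bar>iterate n x\<bar> \<le> 2)"
proof (induction n)
  case 0
  have "(\<lambda>_. 0) \<in> bounded_borel"
    by (rule bounded_borelI[where B = 0]) simp_all
  then show ?case by (simp add: iterate_0)
next
  case (Suc n)
  then have n: "iterate n \<in> bounded_borel" by simp
  have osc_Suc: "osc_le (iterate (Suc n)) 2"
    unfolding iterate_Suc by (rule osc_le_diff_const[OF osc[OF n]])
  have "iterate (Suc n) \<in> bounded_borel"
    unfolding iterate_Suc using bounded_borel_add_const[OF closed[OF n], of "- F (iterate n) undefined"] by simp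
  moreover have "\<bar>iterate (Suc n) x\<bar> \<le> 2" for x
    using osc_le_abs_le[OF osc_Suc iterate_undefined] .
  ultimately show ?case by simp
qed

lemma osc_le_iterate_step: "osc_le (\<lambda>x. iterate (Suc n) x - iterate n x) (4 * q ^ n)"
proof (induction n)
  case 0
  have "osc_le (iterate (Suc 0)) 2"
    unfolding iterate_Suc using iterate_bounded[of 0] by (intro osc_le_diff_const osc) simp
  then have "osc_le (iterate (Suc 0)) 4"
    by (rule osc_le_mono) simp
  then show ?case
    by (simp add: iterate_0)
next
  case (Suc n)
  have "0 \<le> 4 * q ^ n" "4 * q ^ n \<le> 4"
    using q by (simp_all add: power_le_one)
  then have "osc_le (\<lambda>x. F (iterate (Suc n)) x - F (iterate n) x) (q * (4 * q ^ n))"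
    using iterate_bounded Suc.IH by (intro contraction) simp_all
  then have "osc_le (\<lambda>x. (F (iterate (Suc n)) x - F (iterate n) x)
      - (F (iterate (Suc n)) undefined - F (iterate n) undefined)) (q * (4 * q ^ n))"
    by (rule osc_le_diff_const)
  then show ?case
    by (simp add: iterate_Suc[of "Suc n"] iterate_Suc[of n] algebra_simps)
qed

lemma iterate_converges:
  obtains \<phi> where "\<phi> \<in> bounded_borel" and "\<And>x. (\<lambda>n. iterate n x) \<longlonglongrightarrow> \<phi> x"
    and "\<And>x n. \<bar>\<phi> x - iterate n x\<bar> \<le> 4 * q ^ n / (1 - q)"
proof -
  have increments: "\<bar>iterate (Suc n) x - iterate n x\<bar> \<le> 4 * q ^ n" for n x
    using osc_le_abs_le[OF osc_le_iterate_step, where z = undefined] iterate_undefined by simp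
  define \<phi> where "\<phi> x = lim (\<lambda>n. iterate n x)" for x
  have conv: "(\<lambda>n. iterate n x) \<longlonglongrightarrow> \<phi> x" and tail: "\<bar>\<phi> x - iterate n x\<bar> \<le> 4 * q ^ n / (1 - q)" for x n
  proof -
    obtain l where "(\<lambda>n. iterate n x) \<longlonglongrightarrow> l" "\<And>n. \<bar>l - iterate n x\<bar> \<le> 4 * q ^ n / (1 - q)"
      using LIMSEQ_geometric_increments[of "\<lambda>n. iterate n x", OF increments q] by blast
    then show "(\<lambda>n. iterate n x) \<longlonglongrightarrow> \<phi> x" "\<bar>\<phi> x - iterate n x\<bar> \<le> 4 * q ^ n / (1 - q)"
      by (simp_all add: \<phi>_def limI)
  qed
  have \<phi>: "\<phi> \<in> bounded_borel"
  proof (rule bounded_borelI)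
    show "\<phi> \<in> borel_measurable borel"
      using iterate_bounded by (intro borel_measurable_LIMSEQ_real[OF conv]) (auto elim: bounded_borelE)
    show "\<bar>\<phi> x\<bar> \<le> 2" for x
      using iterate_bounded by (intro LIMSEQ_le_const2[OF tendsto_rabs[OF conv]]) auto
  qed
  show ?thesis
    using that[OF \<phi> conv tail] .
qed

lemma exists_fixed_point_up_to_const:
  obtains \<phi> k where "\<phi> \<in> bounded_borel" and "\<And>x. F \<phi> x = \<phi> x + k"
proof -
  obtain \<phi> where \<phi>: "\<phi> \<in> bounded_borel" and conv: "\<And>x. (\<lambda>n. iterate n x) \<longlonglongrightarrow> \<phi> x"
    and tail: "\<And>x n. \<bar>\<phi> x - iterate n x\<bar> \<le> 4 * q ^ n / (1 - q)"
    by (rule iterate_converges) blast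
  have F_conv: "(\<lambda>n. F (iterate n) x) \<longlonglongrightarrow> F \<phi> x" for x
  proof -
    have lim0: "(\<lambda>n. 4 * q ^ n / (1 - q)) \<longlonglongrightarrow> 0"
      using q by (intro tendsto_divide_zero tendsto_mult_right_zero LIMSEQ_power_zero) simp_all
    have "\<bar>F (iterate n) x - F \<phi> x\<bar> \<le> 4 * q ^ n / (1 - q)" for n
      using iterate_bounded[of n] \<phi> by (intro nonexpansive) (simp_all add: tail abs_minus_commute)
    then have "(\<lambda>n. F (iterate n) x - F \<phi> x) \<longlonglongrightarrow> 0"
      by (intro Lim_null_comparison[OF always_eventually lim0]) simp
    then show ?thesis
      by (simp add: LIM_zero_iff)
  qed
  have "F \<phi> x = \<phi> x + F \<phi> undefined" for x
  proof -
    have "(\<lambda>n. iterate (Suc n) x) \<longlonglongrightarrow> F \<phi> x - F \<phi> undefined"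
      unfolding iterate_Suc by (intro tendsto_diff F_conv)
    moreover have "(\<lambda>n. iterate (Suc n) x) \<longlonglongrightarrow> \<phi> x"
      by (rule LIMSEQ_Suc[OF conv])
    ultimately show ?thesis
      using LIMSEQ_unique by fastforce
  qed
  with \<phi> show ?thesis by (rule that)
qed

end

section \<open>The entropic c-transform\<close>

text \<open>\<open>exp (- 6 / \<epsilon>) = exp (- 2 / \<epsilon>) * exp (- 4 / \<epsilon>)\<close>: the first factor is the Doeblin
  constant of the kernel \<open>exp (- c / \<epsilon>)\<close>, the second comes from oscillations at most 4.\<close>
definition contraction_rate :: "real \<Rightarrow> real" where
  "contraction_rate \<epsilon> = 1 - exp (- 6 / \<epsilon>)"

lemma contraction_rate_bounds: "0 < \<epsilon> \<Longrightarrow> 0 \<le> contraction_rate \<epsilon> \<and> contraction_rate \<epsilon> < 1"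
  by (simp add: contraction_rate_def)

locale entropic_transform =
  fixes c :: "'a::topological_space \<times> 'b::topological_space \<Rightarrow> real" and \<epsilon> :: real
    and M :: "'a measure"
  assumes c_measurable: "c \<in> borel_measurable (borel \<Otimes>\<^sub>M borel)"
    and c_bounded: "\<And>x y. \<bar>c (x, y)\<bar> \<le> 1"
    and eps_pos: "0 < \<epsilon>"
    and M_Prob: "M \<in> Prob"
begin

sublocale prob_space M
  using M_Prob by (simp add: Prob_def)

lemma sets_M: "sets M = sets borel"
  using M_Prob by (simp add: Prob_def)

lemma borel_measurable_M [simp]: "borel_measurable M = borel_measurable borel"
  by (rule measurable_cong_sets[OF sets_M refl])

lemma c_measurable_fst [measurable]: "(\<lambda>x. c (x, y)) \<in> borel_measurable borel"
  using c_measurable by measurable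

definition normalizer :: "('a \<Rightarrow> real) \<Rightarrow> 'b \<Rightarrow> real" where
  "normalizer \<phi> y = (\<integral>x. exp ((\<phi> x - c (x, y)) / \<epsilon>) \<partial>M)"

definition mass :: "('a \<Rightarrow> real) \<Rightarrow> real" where
  "mass \<phi> = (\<integral>x. exp (\<phi> x / \<epsilon>) \<partial>M)"

lemma ctrans_X_eq: "ctrans_X c \<epsilon> M \<phi> y = - \<epsilon> * ln (normalizer \<phi> y)"
  by (simp add: ctrans_X_def normalizer_def exp_eps_def)

lemma integrable_exp_bounded:
  fixes f :: "'a \<Rightarrow> real"
  assumes "f \<in> borel_measurable borel" and "\<And>x. \<bar>f x\<bar> \<le> B"
  shows "integrable M (\<lambda>x. exp (f x))"
  using assms by (intro integrable_const_bound[where B = "exp B"]) (auto simp: abs_le_iff)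

lemma integrable_normalizer:
  assumes "\<phi> \<in> bounded_borel"
  shows "integrable M (\<lambda>x. exp ((\<phi> x - c (x, y)) / \<epsilon>))"
proof -
  obtain B where \<phi>: "\<phi> \<in> borel_measurable borel" "\<And>x. \<bar>\<phi> x\<bar> \<le> B"
    using assms by (metis bounded_borelE)
  have "\<bar>(\<phi> x - c (x, y)) / \<epsilon>\<bar> \<le> (B + 1) / \<epsilon>" for x
    using \<phi>(2)[of x] c_bounded[of x y] eps_pos by (simp add: abs_divide divide_right_mono)
  then show ?thesis
    using \<phi>(1) by (intro integrable_exp_bounded) auto
qed

lemma integrable_mass:
  assumes "\<phi> \<in> bounded_borel"
  shows "integrable M (\<lambda>x. exp (\<phi> x / \<epsilon>))"
proof -
  obtain B where \<phi>: "\<phi> \<in> borel_measurable borel" "\<And>x. \<bar>\<phi> x\<bar> \<le> B"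
    using assms by (metis bounded_borelE)
  have "\<bar>\<phi> x / \<epsilon>\<bar> \<le> B / \<epsilon>" for x
    using \<phi>(2)[of x] eps_pos by (simp add: abs_divide divide_right_mono)
  then show ?thesis
    using \<phi>(1) by (intro integrable_exp_bounded) auto
qed

lemma mass_bounds:
  assumes "\<phi> \<in> borel_measurable borel" and "\<And>x. a \<le> \<phi> x \<and> \<phi> x \<le> b"
  shows "exp (a / \<epsilon>) \<le> mass \<phi> \<and> mass \<phi> \<le> exp (b / \<epsilon>)"
proof -
  have "\<bar>\<phi> x\<bar> \<le> \<bar>a\<bar> + \<bar>b\<bar>" for x
    using assms(2)[of x] by arith
  then have "\<bar>\<phi> x / \<epsilon>\<bar> \<le> (\<bar>a\<bar> + \<bar>b\<bar>) / \<epsilon>" for x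
    using eps_pos by (simp add: abs_divide divide_right_mono)
  then have int: "integrable M (\<lambda>x. exp (\<phi> x / \<epsilon>))"
    using assms(1) by (intro integrable_exp_bounded) auto
  have "(\<integral>x. exp (a / \<epsilon>) \<partial>M) \<le> mass \<phi>" "mass \<phi> \<le> (\<integral>x. exp (b / \<epsilon>) \<partial>M)"
    unfolding mass_def using int assms(2) eps_pos by (intro integral_mono; simp add: divide_right_mono)+
  then show ?thesis by (simp add: prob_space)
qed

lemma mass_pos:
  assumes "\<phi> \<in> bounded_borel"
  shows "0 < mass \<phi>"
proof -
  obtain B where \<phi>: "\<phi> \<in> borel_measurable borel" "\<And>x. \<bar>\<phi> x\<bar> \<le> B"
    using assms by (metis bounded_borelE)
  have "- B \<le> \<phi> x \<and> \<phi> x \<le> B" for x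
    using \<phi>(2)[of x] by (auto simp: abs_le_iff)
  then have "exp (- B / \<epsilon>) \<le> mass \<phi>"
    using mass_bounds[OF \<phi>(1)] by blast
  then show ?thesis
    using exp_gt_zero less_le_trans by blast
qed

lemma ln_mass_bounds:
  assumes "\<phi> \<in> borel_measurable borel" and "\<And>x. a \<le> \<phi> x \<and> \<phi> x \<le> b"
  shows "a \<le> \<epsilon> * ln (mass \<phi>) \<and> \<epsilon> * ln (mass \<phi>) \<le> b"
proof -
  have "exp (a / \<epsilon>) \<le> mass \<phi>" "mass \<phi> \<le> exp (b / \<epsilon>)"
    using mass_bounds[OF assms] by auto
  moreover have "0 < mass \<phi>"
    using \<open>exp (a / \<epsilon>) \<le> mass \<phi>\<close> exp_gt_zero less_le_trans by blast
  ultimately have "a / \<epsilon> \<le> ln (mass \<phi>)" "ln (mass \<phi>) \<le> ln (exp (b / \<epsilon>))"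
    by (simp add: ln_ge_iff, subst ln_le_cancel_iff) auto
  then have "a / \<epsilon> \<le> ln (mass \<phi>)" "ln (mass \<phi>) \<le> b / \<epsilon>"
    by simp_all
  then show ?thesis
    using eps_pos by (simp add: field_simps)
qed

lemma exp_kernel_split: "exp ((\<phi> x - c (x, y)) / \<epsilon>) = exp (- c (x, y) / \<epsilon>) * exp (\<phi> x / \<epsilon>)"
  by (simp add: mult_exp_exp diff_divide_distrib)

lemma exp_neg_cost_bounds: "exp (- 1 / \<epsilon>) \<le> exp (- c (x, y) / \<epsilon>) \<and> exp (- c (x, y) / \<epsilon>) \<le> exp (1 / \<epsilon>)"
proof -
  have "- 1 / \<epsilon> \<le> - c (x, y) / \<epsilon>" "- c (x, y) / \<epsilon> \<le> 1 / \<epsilon>"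
    using c_bounded[of x y] eps_pos by (intro divide_right_mono; simp add: abs_le_iff)+
  then show ?thesis by simp
qed

lemma normalizer_bounds:
  assumes "\<phi> \<in> bounded_borel"
  shows "exp (- 1 / \<epsilon>) * mass \<phi> \<le> normalizer \<phi> y \<and> normalizer \<phi> y \<le> exp (1 / \<epsilon>) * mass \<phi>"
proof -
  have "exp (- 1 / \<epsilon>) * exp (\<phi> x / \<epsilon>) \<le> exp (- c (x, y) / \<epsilon>) * exp (\<phi> x / \<epsilon>)"
    "exp (- c (x, y) / \<epsilon>) * exp (\<phi> x / \<epsilon>) \<le> exp (1 / \<epsilon>) * exp (\<phi> x / \<epsilon>)" for x
    using exp_neg_cost_bounds[of x y] by (intro mult_right_mono; simp)+
  moreover have "integrable M (\<lambda>x. exp (- c (x, y) / \<epsilon>) * exp (\<phi> x / \<epsilon>))"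
    using integrable_normalizer[OF assms, of y] unfolding exp_kernel_split .
  ultimately have "(\<integral>x. exp (- 1 / \<epsilon>) * exp (\<phi> x / \<epsilon>) \<partial>M) \<le> normalizer \<phi> y"
    "normalizer \<phi> y \<le> (\<integral>x. exp (1 / \<epsilon>) * exp (\<phi> x / \<epsilon>) \<partial>M)"
    unfolding normalizer_def exp_kernel_split using integrable_mass[OF assms]
    by (intro integral_mono; simp)+
  then show ?thesis
    by (simp add: mass_def)
qed

lemma normalizer_pos: "\<phi> \<in> bounded_borel \<Longrightarrow> 0 < normalizer \<phi> y"
  using normalizer_bounds[of \<phi> y] mass_pos[of \<phi>] by (smt (verit) exp_gt_zero mult_pos_pos)

lemma ctrans_X_near_mass:
  assumes "\<phi> \<in> bounded_borel"
  shows "\<bar>ctrans_X c \<epsilon> M \<phi> y + \<epsilon> * ln (mass \<phi>)\<bar> \<le> 1"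
proof -
  have pos: "0 < mass \<phi>" "0 < normalizer \<phi> y"
    using mass_pos[OF assms] normalizer_pos[OF assms] by auto
  have "ln (exp (- 1 / \<epsilon>) * mass \<phi>) \<le> ln (normalizer \<phi> y)"
    "ln (normalizer \<phi> y) \<le> ln (exp (1 / \<epsilon>) * mass \<phi>)"
    using normalizer_bounds[OF assms, of y] pos by (subst ln_le_cancel_iff; simp)+
  then have "\<bar>ln (normalizer \<phi> y) - ln (mass \<phi>)\<bar> \<le> 1 / \<epsilon>"
    using pos by (simp add: ln_mult abs_le_iff)
  then have "\<epsilon> * \<bar>ln (normalizer \<phi> y) - ln (mass \<phi>)\<bar> \<le> 1"
    using eps_pos by (simp add: field_simps)
  moreover have "ctrans_X c \<epsilon> M \<phi> y + \<epsilon> * ln (mass \<phi>) = \<epsilon> * (ln (mass \<phi>) - ln (normalizer \<phi> y))"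
    by (simp add: ctrans_X_eq algebra_simps)
  moreover have "\<bar>\<epsilon> * (ln (mass \<phi>) - ln (normalizer \<phi> y))\<bar> = \<epsilon> * \<bar>ln (normalizer \<phi> y) - ln (mass \<phi>)\<bar>"
    using eps_pos by (simp add: abs_mult abs_minus_commute)
  ultimately show ?thesis
    by simp
qed

lemma ctrans_X_measurable:
  assumes "\<phi> \<in> borel_measurable borel"
  shows "ctrans_X c \<epsilon> M \<phi> \<in> borel_measurable borel"
proof -
  have "(\<lambda>(y, x). exp ((\<phi> x - c (x, y)) / \<epsilon>)) \<in> borel_measurable ((borel :: 'b measure) \<Otimes>\<^sub>M M)"
  proof -
    have "(\<lambda>z. exp ((\<phi> (snd z) - c (snd z, fst z)) / \<epsilon>)) \<in> borel_measurable ((borel :: 'b measure) \<Otimes>\<^sub>M borel)"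
      using assms c_measurable by measurable
    then show ?thesis
      by (simp add: split_beta' measurable_cong_sets[OF sets_pair_measure_cong[OF refl sets_M] refl])
  qed
  then have "(\<lambda>y. \<integral>x. exp ((\<phi> x - c (x, y)) / \<epsilon>) \<partial>M) \<in> borel_measurable borel"
    by (rule borel_measurable_lebesgue_integral)
  then show ?thesis
    unfolding ctrans_X_def exp_eps_def by measurable
qed

lemma ctrans_X_bounded_borel:
  assumes "\<phi> \<in> bounded_borel"
  shows "ctrans_X c \<epsilon> M \<phi> \<in> bounded_borel"
proof (rule bounded_borelI)
  show "ctrans_X c \<epsilon> M \<phi> \<in> borel_measurable borel"
    using assms by (intro ctrans_X_measurable) (auto elim: bounded_borelE)
  show "\<bar>ctrans_X c \<epsilon> M \<phi> y\<bar> \<le> \<bar>\<epsilon> * ln (mass \<phi>)\<bar> + 1" for y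
    using ctrans_X_near_mass[OF assms, of y] by linarith
qed

lemma osc_le_ctrans_X:
  assumes "\<phi> \<in> bounded_borel"
  shows "osc_le (ctrans_X c \<epsilon> M \<phi>) 2"
proof -
  have "- \<epsilon> * ln (mass \<phi>) - 1 \<le> ctrans_X c \<epsilon> M \<phi> y \<and> ctrans_X c \<epsilon> M \<phi> y \<le> - \<epsilon> * ln (mass \<phi>) + 1" for y
    using ctrans_X_near_mass[OF assms, of y] by linarith
  then show ?thesis
    using osc_leI[of "- \<epsilon> * ln (mass \<phi>) - 1" "ctrans_X c \<epsilon> M \<phi>" "- \<epsilon> * ln (mass \<phi>) + 1"] by simp
qed

lemma ctrans_X_add_const:
  assumes "\<phi> \<in> bounded_borel"
  shows "ctrans_X c \<epsilon> M (\<lambda>x. \<phi> x + t) y = ctrans_X c \<epsilon> M \<phi> y - t"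
proof -
  have "exp ((\<phi> x + t - c (x, y)) / \<epsilon>) = exp (t / \<epsilon>) * exp ((\<phi> x - c (x, y)) / \<epsilon>)" for x
    by (simp add: mult_exp_exp add_divide_distrib diff_divide_distrib algebra_simps)
  then have "normalizer (\<lambda>x. \<phi> x + t) y = exp (t / \<epsilon>) * normalizer \<phi> y"
    unfolding normalizer_def by simp
  then have "ctrans_X c \<epsilon> M (\<lambda>x. \<phi> x + t) y = - \<epsilon> * (t / \<epsilon> + ln (normalizer \<phi> y))"
    using normalizer_pos[OF assms, of y] by (simp add: ctrans_X_eq ln_mult_pos)
  also have "\<dots> = ctrans_X c \<epsilon> M \<phi> y - t"
    using eps_pos by (simp add: ctrans_X_eq algebra_simps)
  finally show ?thesis .
qed

lemma ctrans_X_antimono: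
  assumes "\<phi>1 \<in> bounded_borel" and "\<phi>2 \<in> bounded_borel" and "\<And>x. \<phi>1 x \<le> \<phi>2 x"
  shows "ctrans_X c \<epsilon> M \<phi>2 y \<le> ctrans_X c \<epsilon> M \<phi>1 y"
proof -
  have "normalizer \<phi>1 y \<le> normalizer \<phi>2 y"
    unfolding normalizer_def using assms eps_pos
    by (intro integral_mono integrable_normalizer) (auto intro: divide_right_mono)
  then show ?thesis
    using normalizer_pos[OF assms(1), of y] eps_pos by (simp add: ctrans_X_eq)
qed

lemma ctrans_X_dist_le:
  assumes \<phi>: "\<phi>1 \<in> bounded_borel" "\<phi>2 \<in> bounded_borel" and d: "\<And>x. \<bar>\<phi>1 x - \<phi>2 x\<bar> \<le> d"
  shows "\<bar>ctrans_X c \<epsilon> M \<phi>1 y - ctrans_X c \<epsilon> M \<phi>2 y\<bar> \<le> d"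
proof -
  have le: "\<phi>1 x \<le> \<phi>2 x + d" "\<phi>2 x \<le> \<phi>1 x + d" for x
    using d[of x] unfolding abs_le_iff by linarith+
  have "ctrans_X c \<epsilon> M (\<lambda>x. \<phi>2 x + d) y \<le> ctrans_X c \<epsilon> M \<phi>1 y"
    using le(1) by (rule ctrans_X_antimono[OF \<phi>(1) bounded_borel_add_const[OF \<phi>(2)]])
  moreover have "ctrans_X c \<epsilon> M (\<lambda>x. \<phi>1 x + d) y \<le> ctrans_X c \<epsilon> M \<phi>2 y"
    using le(2) by (rule ctrans_X_antimono[OF \<phi>(2) bounded_borel_add_const[OF \<phi>(1)]])
  ultimately show ?thesis
    using \<phi> by (simp add: ctrans_X_add_const abs_le_iff)
qed

lemma nn_integral_exp_ctrans_X:
  assumes "\<phi> \<in> bounded_borel"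
  shows "(\<integral>\<^sup>+x. ennreal (exp ((\<phi> x + ctrans_X c \<epsilon> M \<phi> y - c (x, y)) / \<epsilon>)) \<partial>M) = 1"
proof -
  have pos: "0 < normalizer \<phi> y"
    by (rule normalizer_pos[OF assms])
  have "exp (ctrans_X c \<epsilon> M \<phi> y / \<epsilon>) = 1 / normalizer \<phi> y"
    using pos eps_pos by (simp add: ctrans_X_eq exp_minus inverse_eq_divide)
  moreover have "exp ((\<phi> x + ctrans_X c \<epsilon> M \<phi> y - c (x, y)) / \<epsilon>)
      = exp (ctrans_X c \<epsilon> M \<phi> y / \<epsilon>) * exp ((\<phi> x - c (x, y)) / \<epsilon>)" for x
    by (simp add: mult_exp_exp add_divide_distrib diff_divide_distrib algebra_simps)
  ultimately have "(\<integral>\<^sup>+x. ennreal (exp ((\<phi> x + ctrans_X c \<epsilon> M \<phi> y - c (x, y)) / \<epsilon>)) \<partial>M)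
      = (\<integral>\<^sup>+x. ennreal (exp ((\<phi> x - c (x, y)) / \<epsilon>) / normalizer \<phi> y) \<partial>M)"
    by simp
  also have "\<dots> = ennreal (\<integral>x. exp ((\<phi> x - c (x, y)) / \<epsilon>) / normalizer \<phi> y \<partial>M)"
    using integrable_normalizer[OF assms, of y] pos by (intro nn_integral_eq_integral) auto
  also have "\<dots> = 1"
    using pos by (simp add: normalizer_def)
  finally show ?thesis .
qed

lemma ctrans_X_diff_eq:
  assumes \<phi>: "\<phi>1 \<in> bounded_borel" "\<phi>2 \<in> bounded_borel"
  shows "ctrans_X c \<epsilon> M \<phi>1 y - ctrans_X c \<epsilon> M \<phi>2 y
    = - a - \<epsilon> * ln ((\<integral>x. exp (\<phi>2 x / \<epsilon>) * exp (- c (x, y) / \<epsilon>) * exp ((\<phi>1 x - \<phi>2 x - a) / \<epsilon>) \<partial>M)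
                   / (\<integral>x. exp (\<phi>2 x / \<epsilon>) * exp (- c (x, y) / \<epsilon>) \<partial>M))"
    (is "_ = - a - \<epsilon> * ln (?U / ?W)")
proof -
  have "exp ((\<phi>2 x - c (x, y)) / \<epsilon>) = exp (\<phi>2 x / \<epsilon>) * exp (- c (x, y) / \<epsilon>)" for x
    by (simp add: exp_kernel_split)
  moreover have "exp ((\<phi>1 x - c (x, y)) / \<epsilon>)
      = exp (a / \<epsilon>) * (exp (\<phi>2 x / \<epsilon>) * exp (- c (x, y) / \<epsilon>) * exp ((\<phi>1 x - \<phi>2 x - a) / \<epsilon>))" for x
    by (simp add: mult_exp_exp add_divide_distrib diff_divide_distrib algebra_simps)
  ultimately have W: "normalizer \<phi>2 y = ?W" and U: "normalizer \<phi>1 y = exp (a / \<epsilon>) * ?U"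
    by (simp_all add: normalizer_def)
  have "0 < ?W" "0 < ?U"
    using normalizer_pos[OF \<phi>(2), of y] normalizer_pos[OF \<phi>(1), of y] by (simp_all add: W U zero_less_mult_iff)
  then show ?thesis
    using eps_pos by (simp add: ctrans_X_eq W U ln_mult_pos ln_div algebra_simps)
qed

lemma osc_le_ctrans_X_diff:
  assumes \<phi>: "\<phi>1 \<in> bounded_borel" "\<phi>2 \<in> bounded_borel"
    and osc: "osc_le (\<lambda>x. \<phi>1 x - \<phi>2 x) L" and L: "0 \<le> L" "L \<le> 4"
  shows "osc_le (\<lambda>y. ctrans_X c \<epsilon> M \<phi>1 y - ctrans_X c \<epsilon> M \<phi>2 y) (contraction_rate \<epsilon> * L)"
proof -
  obtain a where a: "\<And>x. a \<le> \<phi>1 x - \<phi>2 x" "\<And>x. \<phi>1 x - \<phi>2 x \<le> a + L"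
    using osc by (rule osc_leE) blast
  have [measurable]: "\<phi>1 \<in> borel_measurable borel" "\<phi>2 \<in> borel_measurable borel"
    using \<phi> by (auto elim: bounded_borelE)
  define v where "v x = exp (\<phi>2 x / \<epsilon>)" for x
  define u where "u x = exp ((\<phi>1 x - \<phi>2 x - a) / \<epsilon>)" for x
  define k where "k y x = exp (- c (x, y) / \<epsilon>)" for y x
  define \<theta> where "\<theta> = exp (- 1 / \<epsilon>) / exp (1 / \<epsilon>)"
  define p where "p = (\<integral>x. v x * u x \<partial>M) / (\<integral>x. v x \<partial>M)"
  define r where "r y = (\<integral>x. v x * k y x * u x \<partial>M) / (\<integral>x. v x * k y x \<partial>M)" for y
  have v_int: "integrable M v"
    unfolding v_def by (rule integrable_mass[OF \<phi>(2)])
  have u: "1 \<le> u x" "u x \<le> exp (L / \<epsilon>)" for x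
    using a[of x] eps_pos by (simp_all add: u_def divide_right_mono)
  have meas: "k y \<in> borel_measurable M" "u \<in> borel_measurable M" for y
    unfolding k_def u_def[abs_def] by simp_all measurable
  have k: "exp (- 1 / \<epsilon>) \<le> k y x" "k y x \<le> exp (1 / \<epsilon>)" for y x
    using exp_neg_cost_bounds[of x y] by (simp_all add: k_def)
  have v_pos: "0 < v x" for x
    by (simp add: v_def)
  note ratio = ratio_of_weighted_means_bounds[OF v_int v_pos meas k exp_gt_zero u,
      folded \<theta>_def p_def r_def]
  have diff: "ctrans_X c \<epsilon> M \<phi>1 y - ctrans_X c \<epsilon> M \<phi>2 y = - a - \<epsilon> * ln (r y)" for y
    unfolding r_def v_def k_def u_def by (rule ctrans_X_diff_eq[OF \<phi>])
  have \<theta>: "\<theta> = exp (- 2 / \<epsilon>)" "0 < \<theta>" "\<theta> < 1"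
    using eps_pos by (simp_all add: \<theta>_def exp_diff[symmetric])
  have "osc_le (\<lambda>y. ln (r y)) ((1 - \<theta> * exp (- (4 / \<epsilon>))) * (L / \<epsilon>))"
    using eps_pos L ratio by (intro osc_le_ln_mixture[OF \<theta>(2,3)]) (simp_all add: divide_right_mono)
  then have "osc_le (\<lambda>y. - a - \<epsilon> * ln (r y)) (\<epsilon> * ((1 - \<theta> * exp (- (4 / \<epsilon>))) * (L / \<epsilon>)))"
    using eps_pos by (intro osc_le_affine) simp_all
  moreover have "\<epsilon> * ((1 - \<theta> * exp (- (4 / \<epsilon>))) * (L / \<epsilon>)) = contraction_rate \<epsilon> * L"
    using eps_pos by (simp add: \<theta>(1) contraction_rate_def mult_exp_exp)
  ultimately show ?thesis
    by (simp add: diff)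
qed

end

section \<open>Entropic duality\<close>

lemma ctrans_Y_eq_ctrans_X_swap: "ctrans_Y c \<epsilon> \<xi> \<psi> = ctrans_X (\<lambda>(y, x). c (x, y)) \<epsilon> \<xi> \<psi>"
  by (rule ext) (simp add: ctrans_Y_def ctrans_X_def)

lemma entropic_transform_swap:
  assumes "c \<in> borel_measurable (borel \<Otimes>\<^sub>M borel)" and "\<And>x y. \<bar>c (x, y)\<bar> \<le> 1"
    and "0 < \<epsilon>" and "\<xi> \<in> Prob"
  shows "entropic_transform (\<lambda>(y, x). c (x, y)) \<epsilon> \<xi>"
proof
  show "(\<lambda>(y, x). c (x, y)) \<in> borel_measurable (borel \<Otimes>\<^sub>M borel)"
    using measurable_pair_swap[OF assms(1)] by (simp add: split_beta')
qed (use assms in auto)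

lemma Fce_subset_bounded_borel:
  assumes "c \<in> borel_measurable (borel \<Otimes>\<^sub>M borel)" and "\<And>x y. \<bar>c (x, y)\<bar> \<le> 1" and "0 < \<epsilon>"
  shows "Fce c \<epsilon> \<subseteq> bounded_borel"
proof
  fix \<phi> assume "\<phi> \<in> Fce c \<epsilon>"
  then obtain \<xi> \<psi> where \<xi>: "\<xi> \<in> Prob" and \<psi>: "\<psi> \<in> borel_measurable borel"
    and \<phi>: "\<phi> = ctrans_Y c \<epsilon> \<xi> \<psi>" "\<And>x. \<bar>\<phi> x\<bar> \<le> 3 / 2"
    unfolding Fce_def by blast
  interpret entropic_transform "\<lambda>(y, x). c (x, y)" \<epsilon> \<xi>
    using entropic_transform_swap[OF assms \<xi>] .
  have "\<phi> \<in> borel_measurable borel"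
    unfolding \<phi>(1) ctrans_Y_eq_ctrans_X_swap using \<psi> by (rule ctrans_X_measurable)
  then show "\<phi> \<in> bounded_borel"
    using \<phi>(2) by (rule bounded_borelI)
qed

locale entropic_pair =
  fixes c :: "'a::topological_space \<times> 'b::topological_space \<Rightarrow> real" and \<epsilon> :: real
    and \<mu> :: "'a measure" and \<nu> :: "'b measure"
  assumes c_measurable: "c \<in> borel_measurable (borel \<Otimes>\<^sub>M borel)"
    and c_bounded: "\<And>x y. \<bar>c (x, y)\<bar> \<le> 1"
    and eps_pos: "0 < \<epsilon>"
    and mu_Prob: "\<mu> \<in> Prob" and nu_Prob: "\<nu> \<in> Prob"
begin

sublocale X: entropic_transform c \<epsilon> \<mu>
  using c_measurable c_bounded eps_pos mu_Prob by unfold_locales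

sublocale Y: entropic_transform "\<lambda>(y, x). c (x, y)" \<epsilon> \<nu>
  by (rule entropic_transform_swap[OF c_measurable c_bounded eps_pos nu_Prob])

sublocale pair_prob_space \<mu> \<nu>
  by unfold_locales

lemma sets_pair: "sets (\<mu> \<Otimes>\<^sub>M \<nu>) = sets (borel \<Otimes>\<^sub>M borel)"
  by (rule sets_pair_measure_cong[OF X.sets_M Y.sets_M])

lemma c_measurable_pair [measurable]: "c \<in> borel_measurable (\<mu> \<Otimes>\<^sub>M \<nu>)"
  using c_measurable measurable_cong_sets[OF sets_pair refl] by blast

definition gibbs_exponent :: "('a \<Rightarrow> real) \<Rightarrow> ('b \<Rightarrow> real) \<Rightarrow> 'a \<times> 'b \<Rightarrow> real" where
  "gibbs_exponent \<phi> \<psi> z = (\<phi> (fst z) + \<psi> (snd z) - c z) / \<epsilon>"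

lemma gibbs_exponent_measurable [measurable]:
  assumes "\<phi> \<in> borel_measurable borel" and "\<psi> \<in> borel_measurable borel"
  shows "gibbs_exponent \<phi> \<psi> \<in> borel_measurable (\<mu> \<Otimes>\<^sub>M \<nu>)"
proof -
  have [measurable]: "\<phi> \<in> borel_measurable \<mu>" "\<psi> \<in> borel_measurable \<nu>"
    using assms by simp_all
  show ?thesis
    unfolding gibbs_exponent_def[abs_def] by measurable
qed

lemma integrable_coupling:
  fixes f :: "'a \<times> 'b \<Rightarrow> real"
  assumes "\<pi> \<in> couplings \<mu> \<nu>" and "f \<in> borel_measurable (\<mu> \<Otimes>\<^sub>M \<nu>)" and "\<And>z. \<bar>f z\<bar> \<le> B"
  shows "integrable \<pi> f"
proof -
  interpret \<pi>: prob_space \<pi>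
    using assms(1) by (simp add: couplings_def)
  have "sets \<pi> = sets (\<mu> \<Otimes>\<^sub>M \<nu>)"
    using assms(1) by (simp add: couplings_def)
  then have "f \<in> borel_measurable \<pi>"
    using assms(2) measurable_cong_sets by blast
  then show ?thesis
    using assms(3) by (intro \<pi>.integrable_const_bound[where B = B]) auto
qed

lemma integral_coupling_marginals:
  fixes \<phi> :: "'a \<Rightarrow> real" and \<psi> :: "'b \<Rightarrow> real"
  assumes \<pi>: "\<pi> \<in> couplings \<mu> \<nu>" and "\<phi> \<in> borel_measurable borel" and "\<psi> \<in> borel_measurable borel"
  shows "(\<integral>z. \<phi> (fst z) \<partial>\<pi>) = (\<integral>x. \<phi> x \<partial>\<mu>)" and "(\<integral>z. \<psi> (snd z) \<partial>\<pi>) = (\<integral>y. \<psi> y \<partial>\<nu>)"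
proof -
  have sets_\<pi>: "sets \<pi> = sets (\<mu> \<Otimes>\<^sub>M \<nu>)" and marginals: "distr \<pi> \<mu> fst = \<mu>" "distr \<pi> \<nu> snd = \<nu>"
    using \<pi> by (simp_all add: couplings_def)
  have "fst \<in> measurable \<pi> \<mu>" "snd \<in> measurable \<pi> \<nu>"
    by (simp_all add: measurable_cong_sets[OF sets_\<pi> refl])
  then show "(\<integral>z. \<phi> (fst z) \<partial>\<pi>) = (\<integral>x. \<phi> x \<partial>\<mu>)" "(\<integral>z. \<psi> (snd z) \<partial>\<pi>) = (\<integral>y. \<psi> y \<partial>\<nu>)"
    using assms(2,3) integral_distr[of fst \<pi> \<mu> \<phi>] integral_distr[of snd \<pi> \<nu> \<psi>]
    by (simp_all add: marginals)
qed

lemma integral_coupling_gibbs_exponent: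
  assumes \<pi>: "\<pi> \<in> couplings \<mu> \<nu>" and \<phi>: "\<phi> \<in> bounded_borel" and \<psi>: "\<psi> \<in> bounded_borel"
  shows "(\<integral>z. c z \<partial>\<pi>) + \<epsilon> * (\<integral>z. gibbs_exponent \<phi> \<psi> z \<partial>\<pi>) = (\<integral>x. \<phi> x \<partial>\<mu>) + (\<integral>y. \<psi> y \<partial>\<nu>)"
proof -
  obtain B1 B2 where \<phi>': "\<phi> \<in> borel_measurable borel" "\<And>x. \<bar>\<phi> x\<bar> \<le> B1"
    and \<psi>': "\<psi> \<in> borel_measurable borel" "\<And>y. \<bar>\<psi> y\<bar> \<le> B2"
    using \<phi> \<psi> by (metis bounded_borelE)
  have [measurable]: "\<phi> \<in> borel_measurable \<mu>" "\<psi> \<in> borel_measurable \<nu>"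
    using \<phi>'(1) \<psi>'(1) by simp_all
  have "\<bar>c z\<bar> \<le> 1" for z
    using c_bounded[of "fst z" "snd z"] by simp
  then have "integrable \<pi> c"
    by (rule integrable_coupling[OF \<pi> c_measurable_pair])
  moreover have "integrable \<pi> (\<lambda>z. \<phi> (fst z))"
    by (intro integrable_coupling[OF \<pi>, where B = B1] \<phi>'(2)) measurable
  moreover have "integrable \<pi> (\<lambda>z. \<psi> (snd z))"
    by (intro integrable_coupling[OF \<pi>, where B = B2] \<psi>'(2)) measurable
  ultimately have int: "integrable \<pi> c" "integrable \<pi> (\<lambda>z. \<phi> (fst z))" "integrable \<pi> (\<lambda>z. \<psi> (snd z))"
    by blast+
  have "\<epsilon> * (\<integral>z. gibbs_exponent \<phi> \<psi> z \<partial>\<pi>) = (\<integral>z. \<phi> (fst z) + \<psi> (snd z) - c z \<partial>\<pi>)"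
    using eps_pos by (simp add: gibbs_exponent_def)
  also have "\<dots> = (\<integral>x. \<phi> x \<partial>\<mu>) + (\<integral>y. \<psi> y \<partial>\<nu>) - (\<integral>z. c z \<partial>\<pi>)"
    using int integral_coupling_marginals[OF \<pi> \<phi>'(1) \<psi>'(1)] by simp
  finally show ?thesis by simp
qed

lemma integrable_coupling_gibbs_exponent:
  assumes \<pi>: "\<pi> \<in> couplings \<mu> \<nu>" and \<phi>: "\<phi> \<in> bounded_borel" and \<psi>: "\<psi> \<in> bounded_borel"
  shows "integrable \<pi> (gibbs_exponent \<phi> \<psi>)"
proof -
  obtain B1 B2 where \<phi>': "\<phi> \<in> borel_measurable borel" "\<And>x. \<bar>\<phi> x\<bar> \<le> B1"
    and \<psi>': "\<psi> \<in> borel_measurable borel" "\<And>y. \<bar>\<psi> y\<bar> \<le> B2"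
    using \<phi> \<psi> by (metis bounded_borelE)
  have "\<bar>gibbs_exponent \<phi> \<psi> z\<bar> \<le> (B1 + B2 + 1) / \<epsilon>" for z
  proof -
    have "\<bar>\<phi> (fst z) + \<psi> (snd z) - c z\<bar> \<le> B1 + B2 + 1"
      using \<phi>'(2)[of "fst z"] \<psi>'(2)[of "snd z"] c_bounded[of "fst z" "snd z"] by simp
    then show ?thesis
      using eps_pos by (simp add: gibbs_exponent_def abs_divide divide_right_mono)
  qed
  then show ?thesis
    using \<phi>'(1) \<psi>'(1) by (intro integrable_coupling[OF \<pi>]) simp_all
qed

lemma nn_integral_exp_gibbs_ctrans_X:
  assumes \<phi>: "\<phi> \<in> bounded_borel"
  shows "(\<integral>\<^sup>+z. ennreal (exp (gibbs_exponent \<phi> (ctrans_X c \<epsilon> \<mu> \<phi>) z)) \<partial>(\<mu> \<Otimes>\<^sub>M \<nu>)) = 1"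
proof -
  have [measurable]: "\<phi> \<in> borel_measurable borel" "ctrans_X c \<epsilon> \<mu> \<phi> \<in> borel_measurable borel"
    using \<phi> X.ctrans_X_bounded_borel[OF \<phi>] by (auto elim: bounded_borelE)
  have "(\<lambda>z. ennreal (exp (gibbs_exponent \<phi> (ctrans_X c \<epsilon> \<mu> \<phi>) z))) \<in> borel_measurable (\<mu> \<Otimes>\<^sub>M \<nu>)"
    by measurable
  from nn_integral_snd[OF this]
  have "(\<integral>\<^sup>+z. ennreal (exp (gibbs_exponent \<phi> (ctrans_X c \<epsilon> \<mu> \<phi>) z)) \<partial>(\<mu> \<Otimes>\<^sub>M \<nu>))
      = (\<integral>\<^sup>+y. \<integral>\<^sup>+x. ennreal (exp ((\<phi> x + ctrans_X c \<epsilon> \<mu> \<phi> y - c (x, y)) / \<epsilon>)) \<partial>\<mu> \<partial>\<nu>)"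
    by (simp add: gibbs_exponent_def)
  also have "\<dots> = 1"
    using X.nn_integral_exp_ctrans_X[OF \<phi>] Y.emeasure_space_1 by simp
  finally show ?thesis .
qed

lemma nn_integral_exp_gibbs_ctrans_Y:
  assumes \<psi>: "\<psi> \<in> bounded_borel"
  shows "(\<integral>\<^sup>+z. ennreal (exp (gibbs_exponent (ctrans_Y c \<epsilon> \<nu> \<psi>) \<psi> z)) \<partial>(\<mu> \<Otimes>\<^sub>M \<nu>)) = 1"
proof -
  have [measurable]: "\<psi> \<in> borel_measurable borel" "ctrans_Y c \<epsilon> \<nu> \<psi> \<in> borel_measurable borel"
    using \<psi> Y.ctrans_X_bounded_borel[OF \<psi>] by (auto elim: bounded_borelE simp: ctrans_Y_eq_ctrans_X_swap)
  have "(\<lambda>z. ennreal (exp (gibbs_exponent (ctrans_Y c \<epsilon> \<nu> \<psi>) \<psi> z))) \<in> borel_measurable (\<mu> \<Otimes>\<^sub>M \<nu>)"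
    by measurable
  from Y.nn_integral_fst[OF this]
  have "(\<integral>\<^sup>+z. ennreal (exp (gibbs_exponent (ctrans_Y c \<epsilon> \<nu> \<psi>) \<psi> z)) \<partial>(\<mu> \<Otimes>\<^sub>M \<nu>))
      = (\<integral>\<^sup>+x. \<integral>\<^sup>+y. ennreal (exp ((\<psi> y + ctrans_Y c \<epsilon> \<nu> \<psi> x - c (x, y)) / \<epsilon>)) \<partial>\<nu> \<partial>\<mu>)"
    by (simp add: gibbs_exponent_def add.commute)
  also have "\<dots> = 1"
    using Y.nn_integral_exp_ctrans_X[OF \<psi>] X.emeasure_space_1 by (simp add: ctrans_Y_eq_ctrans_X_swap)
  finally show ?thesis .
qed

lemma weak_duality:
  assumes \<phi>: "\<phi> \<in> bounded_borel"
  shows "ereal ((\<integral>x. \<phi> x \<partial>\<mu>) + (\<integral>y. ctrans_X c \<epsilon> \<mu> \<phi> y \<partial>\<nu>)) \<le> OT c \<epsilon> \<mu> \<nu>"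
  unfolding OT_def
proof (rule INF_greatest)
  fix \<pi> assume \<pi>: "\<pi> \<in> couplings \<mu> \<nu>"
  define \<psi> where "\<psi> = ctrans_X c \<epsilon> \<mu> \<phi>"
  have \<psi>: "\<psi> \<in> bounded_borel"
    unfolding \<psi>_def by (rule X.ctrans_X_bounded_borel[OF \<phi>])
  have [measurable]: "\<phi> \<in> borel_measurable borel" "\<psi> \<in> borel_measurable borel"
    using \<phi> \<psi> by (auto elim: bounded_borelE)
  have "ereal (\<integral>z. gibbs_exponent \<phi> \<psi> z \<partial>\<pi>) \<le> KL \<pi> (\<mu> \<Otimes>\<^sub>M \<nu>)"
  proof (rule KL_ge_integral)
    show "prob_space \<pi>" "sets \<pi> = sets (\<mu> \<Otimes>\<^sub>M \<nu>)"
      using \<pi> by (simp_all add: couplings_def)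
    show "prob_space (\<mu> \<Otimes>\<^sub>M \<nu>)"
      by (rule prob_space_pair[OF X.prob_space_axioms Y.prob_space_axioms])
    show "integrable \<pi> (gibbs_exponent \<phi> \<psi>)"
      by (rule integrable_coupling_gibbs_exponent[OF \<pi> \<phi> \<psi>])
    show "(\<integral>\<^sup>+z. ennreal (exp (gibbs_exponent \<phi> \<psi> z)) \<partial>(\<mu> \<Otimes>\<^sub>M \<nu>)) \<le> 1"
      unfolding \<psi>_def using nn_integral_exp_gibbs_ctrans_X[OF \<phi>] by simp
  qed measurable
  then have "ereal (\<integral>z. c z \<partial>\<pi>) + ereal \<epsilon> * ereal (\<integral>z. gibbs_exponent \<phi> \<psi> z \<partial>\<pi>)
      \<le> ereal (\<integral>z. c z \<partial>\<pi>) + ereal \<epsilon> * KL \<pi> (\<mu> \<Otimes>\<^sub>M \<nu>)"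
    using eps_pos by (intro add_left_mono ereal_mult_left_mono) simp_all
  then show "ereal ((\<integral>x. \<phi> x \<partial>\<mu>) + (\<integral>y. ctrans_X c \<epsilon> \<mu> \<phi> y \<partial>\<nu>))
      \<le> ereal (\<integral>z. c z \<partial>\<pi>) + ereal \<epsilon> * KL \<pi> (\<mu> \<Otimes>\<^sub>M \<nu>)"
    using integral_coupling_gibbs_exponent[OF \<pi> \<phi> \<psi>] by (simp add: \<psi>_def)
qed

definition schroedinger_pair :: "('a \<Rightarrow> real) \<Rightarrow> ('b \<Rightarrow> real) \<Rightarrow> bool" where
  "schroedinger_pair \<phi> \<psi> \<longleftrightarrow> \<phi> \<in> bounded_borel \<and> \<psi> \<in> bounded_borel \<and>
     ctrans_X c \<epsilon> \<mu> \<phi> = \<psi> \<and> ctrans_Y c \<epsilon> \<nu> \<psi> = \<phi>"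

lemma OT_le_schroedinger_pair:
  assumes "schroedinger_pair \<phi> \<psi>"
  shows "OT c \<epsilon> \<mu> \<nu> \<le> ereal ((\<integral>x. \<phi> x \<partial>\<mu>) + (\<integral>y. \<psi> y \<partial>\<nu>))"
proof -
  have \<phi>: "\<phi> \<in> bounded_borel" and \<psi>: "\<psi> \<in> bounded_borel"
    and \<psi>_eq: "ctrans_X c \<epsilon> \<mu> \<phi> = \<psi>" and \<phi>_eq: "ctrans_Y c \<epsilon> \<nu> \<psi> = \<phi>"
    using assms by (simp_all add: schroedinger_pair_def)
  have [measurable]: "\<phi> \<in> borel_measurable borel" "\<psi> \<in> borel_measurable borel"
    using \<phi> \<psi> by (auto elim: bounded_borelE)
  define \<pi> where "\<pi> = density (\<mu> \<Otimes>\<^sub>M \<nu>) (\<lambda>z. ennreal (exp (gibbs_exponent \<phi> \<psi> z)))"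
  have \<pi>: "\<pi> \<in> couplings \<mu> \<nu>"
    unfolding \<pi>_def
  proof (rule density_in_couplings[OF X.prob_space_axioms Y.prob_space_axioms])
    show "(\<integral>\<^sup>+y. ennreal (exp (gibbs_exponent \<phi> \<psi> (x, y))) \<partial>\<nu>) = 1" for x
      using Y.nn_integral_exp_ctrans_X[OF \<psi>, of x] \<phi>_eq
      by (simp add: gibbs_exponent_def ctrans_Y_eq_ctrans_X_swap add.commute)
    show "(\<integral>\<^sup>+x. ennreal (exp (gibbs_exponent \<phi> \<psi> (x, y))) \<partial>\<mu>) = 1" for y
      using X.nn_integral_exp_ctrans_X[OF \<phi>, of y] \<psi>_eq by (simp add: gibbs_exponent_def)
  qed measurable
  have "KL \<pi> (\<mu> \<Otimes>\<^sub>M \<nu>) = ereal (\<integral>z. gibbs_exponent \<phi> \<psi> z \<partial>\<pi>)"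
    unfolding \<pi>_def
    by (rule KL_density_exp[OF prob_space_pair[OF X.prob_space_axioms Y.prob_space_axioms]])
       (use integrable_coupling_gibbs_exponent[OF \<pi> \<phi> \<psi>] in \<open>simp_all add: \<pi>_def\<close>)
  moreover have "OT c \<epsilon> \<mu> \<nu> \<le> ereal (\<integral>z. c z \<partial>\<pi>) + ereal \<epsilon> * KL \<pi> (\<mu> \<Otimes>\<^sub>M \<nu>)"
    unfolding OT_def by (rule INF_lower[OF \<pi>])
  ultimately show ?thesis
    using integral_coupling_gibbs_exponent[OF \<pi> \<phi> \<psi>] by simp
qed

definition sinkhorn :: "('a \<Rightarrow> real) \<Rightarrow> 'a \<Rightarrow> real" where
  "sinkhorn \<phi> = ctrans_Y c \<epsilon> \<nu> (ctrans_X c \<epsilon> \<mu> \<phi>)"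

lemma osc_contraction_sinkhorn: "osc_contraction sinkhorn (contraction_rate \<epsilon> ^ 2)"
proof
  have rate: "0 \<le> contraction_rate \<epsilon>" "contraction_rate \<epsilon> < 1"
    using contraction_rate_bounds[OF eps_pos] by auto
  then show "0 \<le> contraction_rate \<epsilon> ^ 2" "contraction_rate \<epsilon> ^ 2 < 1"
    by (simp_all add: power_less_one_iff)
  have sinkhorn_eq: "sinkhorn \<phi> = ctrans_X (\<lambda>(y, x). c (x, y)) \<epsilon> \<nu> (ctrans_X c \<epsilon> \<mu> \<phi>)" for \<phi>
    by (simp add: sinkhorn_def ctrans_Y_eq_ctrans_X_swap)
  show "sinkhorn \<phi> \<in> bounded_borel" "osc_le (sinkhorn \<phi>) 2" if "\<phi> \<in> bounded_borel" for \<phi>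
    unfolding sinkhorn_eq using that
    by (simp_all add: X.ctrans_X_bounded_borel Y.ctrans_X_bounded_borel Y.osc_le_ctrans_X)
  show "osc_le (\<lambda>x. sinkhorn \<phi>1 x - sinkhorn \<phi>2 x) (contraction_rate \<epsilon> ^ 2 * L)"
    if "\<phi>1 \<in> bounded_borel" "\<phi>2 \<in> bounded_borel" "osc_le (\<lambda>x. \<phi>1 x - \<phi>2 x) L" "0 \<le> L" "L \<le> 4"
    for \<phi>1 \<phi>2 L
  proof -
    have "contraction_rate \<epsilon> * L \<le> 1 * L"
      using rate that(4) by (intro mult_right_mono) auto
    then show ?thesis
      unfolding sinkhorn_eq using rate that
      by (simp add: power2_eq_square mult.assoc X.ctrans_X_bounded_borel
          Y.osc_le_ctrans_X_diff X.osc_le_ctrans_X_diff)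
  qed
  show "\<bar>sinkhorn \<phi>1 x - sinkhorn \<phi>2 x\<bar> \<le> d"
    if "\<phi>1 \<in> bounded_borel" "\<phi>2 \<in> bounded_borel" "\<And>x. \<bar>\<phi>1 x - \<phi>2 x\<bar> \<le> d" for \<phi>1 \<phi>2 d x
    unfolding sinkhorn_eq using that
    by (intro Y.ctrans_X_dist_le X.ctrans_X_bounded_borel X.ctrans_X_dist_le)
qed

lemma sinkhorn_fixed_up_to_const:
  assumes \<phi>: "\<phi> \<in> bounded_borel" and fixed: "\<And>x. sinkhorn \<phi> x = \<phi> x + k"
  shows "k = 0"
proof -
  define \<psi> where "\<psi> = ctrans_X c \<epsilon> \<mu> \<phi>"
  have \<psi>: "\<psi> \<in> bounded_borel"
    unfolding \<psi>_def by (rule X.ctrans_X_bounded_borel[OF \<phi>])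
  have [measurable]: "\<phi> \<in> borel_measurable borel" "\<psi> \<in> borel_measurable borel"
    using \<phi> \<psi> by (auto elim: bounded_borelE)
  have shift: "exp (gibbs_exponent (ctrans_Y c \<epsilon> \<nu> \<psi>) \<psi> z) = exp (k / \<epsilon>) * exp (gibbs_exponent \<phi> \<psi> z)" for z
    using fixed[of "fst z"]
    by (simp add: gibbs_exponent_def sinkhorn_def \<psi>_def mult_exp_exp add_divide_distrib diff_divide_distrib)
  have "1 = (\<integral>\<^sup>+z. ennreal (exp (gibbs_exponent (ctrans_Y c \<epsilon> \<nu> \<psi>) \<psi> z)) \<partial>(\<mu> \<Otimes>\<^sub>M \<nu>))"
    by (rule nn_integral_exp_gibbs_ctrans_Y[OF \<psi>, symmetric])
  also have "\<dots> = (\<integral>\<^sup>+z. ennreal (exp (k / \<epsilon>)) * ennreal (exp (gibbs_exponent \<phi> \<psi> z)) \<partial>(\<mu> \<Otimes>\<^sub>M \<nu>))"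
    unfolding shift by (simp add: ennreal_mult)
  also have "\<dots> = ennreal (exp (k / \<epsilon>)) * (\<integral>\<^sup>+z. ennreal (exp (gibbs_exponent \<phi> \<psi> z)) \<partial>(\<mu> \<Otimes>\<^sub>M \<nu>))"
    by (rule nn_integral_cmult) measurable
  also have "\<dots> = ennreal (exp (k / \<epsilon>))"
    using nn_integral_exp_gibbs_ctrans_X[OF \<phi>] by (simp add: \<psi>_def)
  finally have "exp (k / \<epsilon>) = 1"
    by simp
  then show "k = 0"
    using eps_pos by simp
qed

lemma exists_schroedinger_pair: "\<exists>\<phi> \<psi>. schroedinger_pair \<phi> \<psi>"
proof -
  obtain \<phi> k where \<phi>: "\<phi> \<in> bounded_borel" and fixed: "\<And>x. sinkhorn \<phi> x = \<phi> x + k"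
    by (rule osc_contraction.exists_fixed_point_up_to_const[OF osc_contraction_sinkhorn]) blast
  then have "k = 0"
    by (rule sinkhorn_fixed_up_to_const)
  then have "schroedinger_pair \<phi> (ctrans_X c \<epsilon> \<mu> \<phi>)"
    using \<phi> fixed X.ctrans_X_bounded_borel[OF \<phi>] by (simp add: schroedinger_pair_def sinkhorn_def fun_eq_iff)
  then show ?thesis by blast
qed

lemma schroedinger_pair_add_const:
  assumes "schroedinger_pair \<phi> \<psi>"
  shows "schroedinger_pair (\<lambda>x. \<phi> x + t) (\<lambda>y. \<psi> y - t)"
proof -
  have \<phi>: "\<phi> \<in> bounded_borel" and \<psi>: "\<psi> \<in> bounded_borel"
    and \<psi>_eq: "ctrans_X c \<epsilon> \<mu> \<phi> = \<psi>" and \<phi>_eq: "ctrans_Y c \<epsilon> \<nu> \<psi> = \<phi>"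
    using assms by (simp_all add: schroedinger_pair_def)
  have "(\<lambda>x. \<phi> x + t) \<in> bounded_borel" "(\<lambda>y. \<psi> y + - t) \<in> bounded_borel"
    by (rule bounded_borel_add_const[OF \<phi>], rule bounded_borel_add_const[OF \<psi>])
  moreover have "ctrans_X c \<epsilon> \<mu> (\<lambda>x. \<phi> x + t) y = \<psi> y - t" for y
    using \<psi>_eq by (simp add: X.ctrans_X_add_const[OF \<phi>])
  moreover have "ctrans_Y c \<epsilon> \<nu> (\<lambda>y. \<psi> y - t) x = \<phi> x + t" for x
    using \<phi>_eq Y.ctrans_X_add_const[OF \<psi>, of "- t" x] by (simp add: ctrans_Y_eq_ctrans_X_swap)
  ultimately show ?thesis
    by (simp add: schroedinger_pair_def fun_eq_iff)
qed

lemma exists_balanced_schroedinger_pair: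
  obtains \<phi> \<psi> where "schroedinger_pair \<phi> \<psi>" and "\<And>x. \<bar>\<phi> x\<bar> \<le> 3 / 2" and "\<And>y. \<bar>\<psi> y\<bar> \<le> 3 / 2"
proof -
  obtain \<phi> \<psi> where pair: "schroedinger_pair \<phi> \<psi>"
    using exists_schroedinger_pair by blast
  then have \<phi>: "\<phi> \<in> bounded_borel" and \<psi>: "\<psi> \<in> bounded_borel"
    and \<psi>_eq: "ctrans_X c \<epsilon> \<mu> \<phi> = \<psi>" and \<phi>_eq: "ctrans_Y c \<epsilon> \<nu> \<psi> = \<phi>"
    by (simp_all add: schroedinger_pair_def)
  define A where "A = - \<epsilon> * ln (Y.mass \<psi>)"
  define B where "B = - \<epsilon> * ln (X.mass \<phi>)"
  have \<phi>_near: "\<bar>\<phi> x - A\<bar> \<le> 1" for x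
    using Y.ctrans_X_near_mass[OF \<psi>, of x] \<phi>_eq by (simp add: A_def ctrans_Y_eq_ctrans_X_swap)
  have \<psi>_near: "\<bar>\<psi> y - B\<bar> \<le> 1" for y
    using X.ctrans_X_near_mass[OF \<phi>, of y] \<psi>_eq by (simp add: B_def)
  have "B - 1 \<le> \<psi> y \<and> \<psi> y \<le> B + 1" for y
    using \<psi>_near[of y] by (simp add: abs_le_iff)
  then have "B - 1 \<le> \<epsilon> * ln (Y.mass \<psi>) \<and> \<epsilon> * ln (Y.mass \<psi>) \<le> B + 1"
    using \<psi> by (intro Y.ln_mass_bounds) (auto elim: bounded_borelE)
  then have AB: "\<bar>A + B\<bar> \<le> 1"
    by (simp add: A_def abs_le_iff)
  define t where "t = (B - A) / 2"
  have "\<bar>\<phi> x + t\<bar> \<le> \<bar>\<phi> x - A\<bar> + \<bar>A + B\<bar> / 2" "\<bar>\<psi> y - t\<bar> \<le> \<bar>\<psi> y - B\<bar> + \<bar>A + B\<bar> / 2" for x y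
    using abs_triangle_ineq[of "\<phi> x - A" "(A + B) / 2"] abs_triangle_ineq[of "\<psi> y - B" "(A + B) / 2"]
    by (simp_all add: t_def field_simps)
  moreover have "\<bar>\<phi> x - A\<bar> + \<bar>A + B\<bar> / 2 \<le> 3 / 2" "\<bar>\<psi> y - B\<bar> + \<bar>A + B\<bar> / 2 \<le> 3 / 2" for x y
    using \<phi>_near[of x] \<psi>_near[of y] AB by simp_all
  ultimately show ?thesis
    using that[OF schroedinger_pair_add_const[OF pair, of t]] by (meson order_trans)
qed

end

theorem mainTheorem1:
  fixes c :: "'a::polish_space \<times> 'b::polish_space \<Rightarrow> real" and \<epsilon> :: real
  assumes "c \<in> borel_measurable (borel \<Otimes>\<^sub>M borel)"
    and "\<And>x y. \<bar>c (x, y)\<bar> \<le> 1"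
    and "\<epsilon> > 0"
    and "\<mu> \<in> Prob" and "\<nu> \<in> Prob"
  shows "(\<exists>\<phi> \<in> Fce c \<epsilon>. OT c \<epsilon> \<mu> \<nu> =
            ereal ((\<integral> x. \<phi> x \<partial>\<mu>) + (\<integral> y. ctrans_X c \<epsilon> \<mu> \<phi> y \<partial>\<nu>)))
       \<and> (\<forall>\<phi> \<in> Fce c \<epsilon>.
            ereal ((\<integral> x. \<phi> x \<partial>\<mu>) + (\<integral> y. ctrans_X c \<epsilon> \<mu> \<phi> y \<partial>\<nu>)) \<le> OT c \<epsilon> \<mu> \<nu>)"
proof -
  interpret entropic_pair c \<epsilon> \<mu> \<nu>
    using assms by unfold_locales
  obtain \<phi> \<psi> where pair: "schroedinger_pair \<phi> \<psi>"
    and bounds: "\<And>x. \<bar>\<phi> x\<bar> \<le> 3 / 2" "\<And>y. \<bar>\<psi> y\<bar> \<le> 3 / 2"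
    by (rule exists_balanced_schroedinger_pair) blast
  then have \<phi>: "\<phi> \<in> bounded_borel" and \<psi>: "\<psi> \<in> borel_measurable borel"
    and \<psi>_eq: "ctrans_X c \<epsilon> \<mu> \<phi> = \<psi>" and \<phi>_eq: "\<phi> = ctrans_Y c \<epsilon> \<nu> \<psi>"
    by (auto simp: schroedinger_pair_def elim: bounded_borelE)
  have "\<phi> \<in> Fce c \<epsilon>"
    unfolding Fce_def using assms(5) \<psi> \<phi>_eq bounds by blast
  moreover have "OT c \<epsilon> \<mu> \<nu> = ereal ((\<integral> x. \<phi> x \<partial>\<mu>) + (\<integral> y. ctrans_X c \<epsilon> \<mu> \<phi> y \<partial>\<nu>))"
    using OT_le_schroedinger_pair[OF pair] weak_duality[OF \<phi>] by (simp add: \<psi>_eq)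
  moreover have "ereal ((\<integral> x. \<phi> x \<partial>\<mu>) + (\<integral> y. ctrans_X c \<epsilon> \<mu> \<phi> y \<partial>\<nu>)) \<le> OT c \<epsilon> \<mu> \<nu>"
    if "\<phi> \<in> Fce c \<epsilon>" for \<phi>
    using weak_duality Fce_subset_bounded_borel[OF assms(1-3)] that by blast
  ultimately show ?thesis
    by blast
qed

end
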